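(* Let $n, m \in \mathbb{N}$ with $n \ge 1$, let $N_1,\dots,N_n \in \mathbb{N}$, let $k_{i,j}, q_{i,j} \in \mathbb{R}$ for $i \in [n]$, $j \in [N_i]$, let $f_1,\dots,f_m \in \mathbb{R}[x_1,\dots,x_n]$ and $p_1,\dots,p_m \in \mathbb{R}$, let $M \in \mathbb{R}_+$, and let $\varphi:\mathbb{R}^n_+ \to \mathbb{R}_+$ be a continuous piecewise polynomial payoff function. Let $d$ be the smallest even integer with $d \ge \max_{i,j,\ell}\{\deg(\varphi),\deg(f_{i,j}),\deg(f_\ell)\}+1$, where $f_{i,j}(\mathbf{x})=\max(0,x_i-k_{i,j})$. Consider the problem of maximizing (respectively minimizing) $\int_{\mathbb{R}^n_+}\varphi\,\mathrm{d}\mu$ over positive finite Borel measures $\mu$ on $\mathbb{R}^n_+$ subject to $\int \max(0,x_i-k_{i,j})\,\mathrm{d}\mu = q_{i,j}$ for all $i\in[n]$, $j\in[N_i]$; $\int f_\ell\,\mathrm{d}\mu = p_\ell$ for all $\ell\in[m]$; $\int\mathrm{d}\mu = 1$; and $\int \|\mathbf{x}\|_2^d\,\mathrm{d}\mu \le M$. If this problem is feasible, then its optimal value is attained by an atomic measure with finitely many atoms, namely at most $n\sum_{i=1}^n N_i + m + 3$ atoms.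
   Context: $\mathbb{R}_+=[0,\infty)$, $[N]=\{1,\dots,N\}$, $\|\cdot\|_2$ is the Euclidean norm. An atomic measure with finitely many atoms is a finite nonnegative combination $\sum_j \alpha_j\delta_{\mathbf{x}_j}$ of Dirac measures. For a piecewise polynomial function, $\deg$ denotes the largest degree of its polynomial pieces. *)

theory Defs
  imports "HOL-Analysis.Analysis"
begin

definition nonneg_orthant :: "(real ^ 'n) set" where
  "nonneg_orthant = {x. \<forall>i. 0 \<le> x $ i}"

definition is_poly_deg :: "nat \<Rightarrow> (real ^ 'n \<Rightarrow> real) \<Rightarrow> bool" where
  "is_poly_deg D f \<longleftrightarrow>
     (\<exists>c :: ('n \<Rightarrow> nat) \<Rightarrow> real.
        f = (\<lambda>x. \<Sum>\<alpha>\<in>{\<alpha>::'n\<Rightarrow>nat. sum \<alpha> UNIV \<le> D}. c \<alpha> * (\<Prod>i\<in>UNIV. (x $ i) ^ \<alpha> i)))"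

definition is_poly :: "(real ^ 'n \<Rightarrow> real) \<Rightarrow> bool" where
  "is_poly f \<longleftrightarrow> (\<exists>D. is_poly_deg D f)"

definition poly_deg :: "(real ^ 'n \<Rightarrow> real) \<Rightarrow> nat" where
  "poly_deg f = (LEAST D. is_poly_deg D f)"

definition is_pw_poly_deg :: "(real ^ 'n) set \<Rightarrow> nat \<Rightarrow> (real ^ 'n \<Rightarrow> real) \<Rightarrow> bool" where
  "is_pw_poly_deg S D \<phi> \<longleftrightarrow>
     (\<exists>P :: ((real ^ 'n) set \<times> (real ^ 'n \<Rightarrow> real)) set.
        finite P \<and> S \<subseteq> (\<Union>(A, g)\<in>P. A) \<and>
        (\<forall>(A, g)\<in>P. is_poly_deg D g \<and> (\<forall>x\<in>A \<inter> S. \<phi> x = g x)))"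

definition is_pw_poly :: "(real ^ 'n) set \<Rightarrow> (real ^ 'n \<Rightarrow> real) \<Rightarrow> bool" where
  "is_pw_poly S \<phi> \<longleftrightarrow> (\<exists>D. is_pw_poly_deg S D \<phi>)"

definition pw_poly_deg :: "(real ^ 'n) set \<Rightarrow> (real ^ 'n \<Rightarrow> real) \<Rightarrow> nat" where
  "pw_poly_deg S \<phi> = (LEAST D. is_pw_poly_deg S D \<phi>)"

definition feasible_measures ::
  "('n \<Rightarrow> nat) \<Rightarrow> ('n \<Rightarrow> nat \<Rightarrow> real) \<Rightarrow> ('n \<Rightarrow> nat \<Rightarrow> real) \<Rightarrow> nat \<Rightarrow>
   (nat \<Rightarrow> real ^ 'n \<Rightarrow> real) \<Rightarrow> (nat \<Rightarrow> real) \<Rightarrow> real \<Rightarrow> nat \<Rightarrow> (real ^ 'n \<Rightarrow> real) \<Rightarrow>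
   (real ^ 'n) measure set" where
  "feasible_measures N k q m f p M d \<phi> =
     {\<mu>. sets \<mu> = sets borel \<and> finite_measure \<mu> \<and>
          emeasure \<mu> (UNIV - nonneg_orthant) = 0 \<and>
          integrable \<mu> \<phi> \<and>
          (\<forall>i. \<forall>j\<in>{1..N i}. integrable \<mu> (\<lambda>x. max 0 (x $ i - k i j)) \<and>
                 (\<integral>x. max 0 (x $ i - k i j) \<partial>\<mu>) = q i j) \<and>
          (\<forall>l\<in>{1..m}. integrable \<mu> (f l) \<and> (\<integral>x. f l x \<partial>\<mu>) = p l) \<and>
          emeasure \<mu> (space \<mu>) = 1 \<and>
          (\<integral>\<^sup>+x. ennreal (norm x ^ d) \<partial>\<mu>) \<le> ennreal M}"

definition atomic_measure_le :: "nat \<Rightarrow> (real ^ 'n) measure \<Rightarrow> bool" where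
  "atomic_measure_le K \<mu> \<longleftrightarrow>
     (\<exists>X :: (real ^ 'n) set. \<exists>\<alpha> :: real ^ 'n \<Rightarrow> real.
        finite X \<and> card X \<le> K \<and> (\<forall>x\<in>X. 0 \<le> \<alpha> x) \<and> sets \<mu> = sets borel \<and>
        (\<forall>A\<in>sets borel. emeasure \<mu> A = (\<Sum>x\<in>X \<inter> A. ennreal (\<alpha> x))))"

end

theory Submission
  imports Defs "HOL-Probability.Probability"
begin

text \<open>Every test function of the problem (the call payoffs, the polynomials f l, the
  objective, the constant 1 and the norm to the power d) is integrable against a feasible measure, and
  by Richter's theorem its vector of integrals is that of a finitely supported probability measure on
  the orthant; Caratheodory's theorem cuts the support down to K = sum N + m + 3 atoms. Hence the
  problem over measures has the same values as the problem over configurations of K weighted atoms.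
  A maximising sequence of configurations has a subsequence along which each atom either converges
  or escapes to infinity. The moment bound makes the weight of an escaping atom at most
  M / norm x ^ d, so its contribution to every test function of degree less than d vanishes in the
  limit; the limit configuration is therefore feasible and optimal, and it is an atomic measure.\<close>

section \<open>Convex cones in coordinate space\<close>

text \<open>The coordinate space of a finite index set I is modelled by the functions vanishing
  outside I.\<close>

definition supported_on :: "'c set \<Rightarrow> ('c \<Rightarrow> real) \<Rightarrow> bool" where
  "supported_on I x \<longleftrightarrow> (\<forall>i. i \<notin> I \<longrightarrow> x i = 0)"

lemma supported_on_intros:
  "supported_on I (\<lambda>i. 0)"
  "supported_on I x \<Longrightarrow> supported_on I y \<Longrightarrow> supported_on I (\<lambda>i. x i + y i)"
  "supported_on I x \<Longrightarrow> supported_on I (\<lambda>i. - x i)"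
  "supported_on I x \<Longrightarrow> supported_on I (\<lambda>i. s * x i)"
  by (auto simp: supported_on_def)

lemma supported_on_mono: "supported_on I x \<Longrightarrow> I \<subseteq> J \<Longrightarrow> supported_on J x"
  by (auto simp: supported_on_def)

lemma sublinear_odd_imp_linear:
  fixes \<tau> :: "('c \<Rightarrow> real) \<Rightarrow> real"
  assumes subadd: "\<And>y z. supported_on I y \<Longrightarrow> supported_on I z \<Longrightarrow> \<tau> (\<lambda>i. y i + z i) \<le> \<tau> y + \<tau> z"
    and neg: "\<And>y. supported_on I y \<Longrightarrow> \<tau> (\<lambda>i. - y i) \<le> - \<tau> y"
    and pos_hom: "\<And>y s. supported_on I y \<Longrightarrow> 0 < s \<Longrightarrow> \<tau> (\<lambda>i. s * y i) \<le> s * \<tau> y"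
    and y: "supported_on I y" "supported_on I z"
  shows "\<tau> (\<lambda>i. y i + z i) = \<tau> y + \<tau> z" and "\<tau> (\<lambda>i. s * y i) = s * \<tau> y"
proof -
  have odd: "\<tau> (\<lambda>i. - y i) = - \<tau> y" if "supported_on I y" for y
  proof -
    have "\<tau> (\<lambda>i. 0) \<le> \<tau> (\<lambda>i. 0) + \<tau> (\<lambda>i. 0)" "\<tau> (\<lambda>i. - 0) \<le> - \<tau> (\<lambda>i. 0)"
      using subadd[of "\<lambda>i. 0" "\<lambda>i. 0"] neg[of "\<lambda>i. 0"] by (simp_all add: supported_on_intros)
    then have "\<tau> (\<lambda>i. 0) = 0" by simp
    moreover have "\<tau> (\<lambda>i. y i + - y i) \<le> \<tau> y + \<tau> (\<lambda>i. - y i)"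
      using subadd that supported_on_intros by blast
    ultimately show ?thesis using neg[OF that] by simp
  qed
  have "- \<tau> (\<lambda>i. y i + z i) = \<tau> (\<lambda>i. - y i + - z i)"
    using odd[of "\<lambda>i. y i + z i"] y by (simp add: supported_on_intros)
  also have "\<dots> \<le> - \<tau> y - \<tau> z"
    using subadd[of "\<lambda>i. - y i" "\<lambda>i. - z i"] odd y by (simp add: supported_on_intros)
  finally show "\<tau> (\<lambda>i. y i + z i) = \<tau> y + \<tau> z" using subadd[OF y] by simp
  have pos: "\<tau> (\<lambda>i. s * y i) = s * \<tau> y" if "0 < s" for s
  proof -
    have "\<tau> (\<lambda>i. (1 / s) * (s * y i)) \<le> (1 / s) * \<tau> (\<lambda>i. s * y i)"
      using pos_hom[of "\<lambda>i. s * y i" "1 / s"] y that by (simp add: supported_on_intros)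
    then have "s * \<tau> y \<le> \<tau> (\<lambda>i. s * y i)" using that by (simp add: field_simps)
    with pos_hom[OF y(1) that] show ?thesis by simp
  qed
  consider "0 < s" | "s = 0" | "s < 0" by linarith
  then show "\<tau> (\<lambda>i. s * y i) = s * \<tau> y"
  proof cases
    case 2
    then show ?thesis using odd[of "\<lambda>i. 0"] by (simp add: supported_on_intros)
  next
    case 3
    have "\<tau> (\<lambda>i. s * y i) = - \<tau> (\<lambda>i. (- s) * y i)"
      using odd[of "\<lambda>i. (- s) * y i"] y by (simp add: supported_on_intros)
    then show ?thesis using pos[of "- s"] 3 by simp
  qed (use pos in simp)
qed

lemma linear_functional_coordinates:
  fixes \<tau> :: "('c \<Rightarrow> real) \<Rightarrow> real"
  assumes "finite I"
    and add: "\<And>y z. supported_on I y \<Longrightarrow> supported_on I z \<Longrightarrow> \<tau> (\<lambda>i. y i + z i) = \<tau> y + \<tau> z"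
    and hom: "\<And>y s. supported_on I y \<Longrightarrow> \<tau> (\<lambda>i. s * y i) = s * \<tau> y"
    and y: "supported_on I y"
  shows "\<tau> y = (\<Sum>i\<in>I. y i * \<tau> (indicator {i}))"
proof -
  have sums: "\<tau> (\<lambda>k. \<Sum>i\<in>F. y i * indicator {i} k) = (\<Sum>i\<in>F. y i * \<tau> (indicator {i}))"
    if "F \<subseteq> I" for F
    using finite_subset[OF that \<open>finite I\<close>] that
  proof (induction F rule: finite_induct)
    case empty
    then show ?case using hom[of "\<lambda>i. 0" 0] by (simp add: supported_on_intros)
  next
    case (insert i F)
    have "supported_on I (\<lambda>k. \<Sum>i\<in>F. y i * indicator {i} k)" "supported_on I (indicator {i})"
      using insert by (auto simp: supported_on_def indicator_def intro!: sum.neutral)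
    then have "\<tau> (\<lambda>k. y i * indicator {i} k + (\<Sum>i\<in>F. y i * indicator {i} k))
        = \<tau> (\<lambda>k. y i * indicator {i} k) + \<tau> (\<lambda>k. \<Sum>i\<in>F. y i * indicator {i} k)"
      using add \<open>supported_on I (\<lambda>k. \<Sum>i\<in>F. y i * indicator {i} k)\<close>
        supported_on_intros(4)[OF \<open>supported_on I (indicator {i})\<close>] by blast
    also have "\<tau> (\<lambda>k. y i * indicator {i} k) = y i * \<tau> (indicator {i})"
      using hom \<open>supported_on I (indicator {i})\<close> by blast
    finally have "\<tau> (\<lambda>k. y i * indicator {i} k + (\<Sum>i\<in>F. y i * indicator {i} k))
        = y i * \<tau> (indicator {i}) + \<tau> (\<lambda>k. \<Sum>i\<in>F. y i * indicator {i} k)" .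
    moreover have "\<tau> (\<lambda>k. \<Sum>i\<in>F. y i * indicator {i} k) = (\<Sum>i\<in>F. y i * \<tau> (indicator {i}))"
      using insert.IH insert.prems by simp
    ultimately show ?case
      by (simp only: sum.insert[OF insert(1,2)])
  qed
  have "(\<lambda>k. \<Sum>i\<in>I. y i * indicator {i} k) = y"
  proof
    fix k
    have "(\<Sum>i\<in>I. y i * indicator {i} k) = (\<Sum>i\<in>I. if i = k then y k else 0)"
      by (intro sum.cong) (auto simp: indicator_def)
    then show "(\<Sum>i\<in>I. y i * indicator {i} k) = y k"
      using y \<open>finite I\<close> by (auto simp: supported_on_def)
  qed
  with sums[OF order_refl] show ?thesis by simp
qed

definition coord_cone :: "'c set \<Rightarrow> ('c \<Rightarrow> real) set \<Rightarrow> bool" where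
  "coord_cone I D \<longleftrightarrow> (\<forall>x\<in>D. supported_on I x) \<and> (\<forall>x\<in>D. \<forall>y\<in>D. (\<lambda>i. x i + y i) \<in> D) \<and>
     (\<forall>x\<in>D. \<forall>s\<ge>0. (\<lambda>i. s * x i) \<in> D)"

definition total_cone :: "'c set \<Rightarrow> ('c \<Rightarrow> real) set \<Rightarrow> bool" where
  "total_cone I D \<longleftrightarrow> coord_cone I D \<and> (\<forall>x. supported_on I x \<longrightarrow> x \<in> D \<or> (\<lambda>i. - x i) \<in> D)"

lemma coord_coneD:
  assumes "coord_cone I D"
  shows "x \<in> D \<Longrightarrow> supported_on I x"
    and "x \<in> D \<Longrightarrow> y \<in> D \<Longrightarrow> (\<lambda>i. x i + y i) \<in> D"
    and "x \<in> D \<Longrightarrow> 0 \<le> s \<Longrightarrow> (\<lambda>i. s * x i) \<in> D"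
  using assms by (auto simp: coord_cone_def)

lemma cone_section_infimum:
  fixes D :: "('c \<Rightarrow> real) set"
  assumes D: "coord_cone J D" and u: "u \<in> D" "(\<lambda>i. - u i) \<notin> D"
    and lift: "\<And>y. supported_on I y \<Longrightarrow> \<exists>t. (\<lambda>i. y i + t * u i) \<in> D"
  obtains \<tau> where "\<And>y t. supported_on I y \<Longrightarrow> \<tau> y < t \<Longrightarrow> (\<lambda>i. y i + t * u i) \<in> D"
    and "\<And>y t. supported_on I y \<Longrightarrow> (\<lambda>i. y i + t * u i) \<in> D \<Longrightarrow> \<tau> y \<le> t"
proof -
  define T where "T y = {t. (\<lambda>i. y i + t * u i) \<in> D}" for y
  have up: "t' \<in> T y" if "t \<in> T y" "t \<le> t'" for y t t'
  proof -
    have "(\<lambda>i. (y i + t * u i) + (t' - t) * u i) \<in> D"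
      using that u coord_coneD[OF D] by (simp add: T_def)
    then show ?thesis by (simp add: T_def algebra_simps)
  qed
  have bdd: "bdd_below (T y)" if y: "supported_on I y" for y
  proof (rule ccontr)
    assume "\<not> bdd_below (T y)"
    moreover obtain s where s: "s \<in> T (\<lambda>i. - y i)"
      using lift[OF supported_on_intros(3)[OF y]] by (auto simp: T_def)
    ultimately obtain t where "t \<in> T y" "t < - s - 1"
      unfolding bdd_below_def by (metis not_le)
    then have "(\<lambda>i. y i + (- s - 1) * u i) \<in> D" using up by (simp add: T_def)
    from coord_coneD(2)[OF D this, of "\<lambda>i. - y i + s * u i"] s
    have "(\<lambda>i. - u i) \<in> D" by (simp add: T_def algebra_simps)
    with u show False by simp
  qed
  show thesis
  proof
    fix y t assume y: "supported_on I y"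
    have ne: "T y \<noteq> {}" using lift[OF y] by (auto simp: T_def)
    show "(\<lambda>i. y i + t * u i) \<in> D" if "Inf (T y) < t"
      using that up cInf_less_iff[OF ne bdd[OF y]] by (auto simp: T_def)
    show "Inf (T y) \<le> t" if "(\<lambda>i. y i + t * u i) \<in> D"
      using that cInf_lower[OF _ bdd[OF y]] by (simp add: T_def)
  qed
qed

lemma cone_section_sublinear:
  fixes D :: "('c \<Rightarrow> real) set" and \<tau> :: "('c \<Rightarrow> real) \<Rightarrow> real"
  assumes "I \<subseteq> J" and D: "total_cone J D" and "u \<in> D"
    and gt: "\<And>y t. supported_on I y \<Longrightarrow> \<tau> y < t \<Longrightarrow> (\<lambda>i. y i + t * u i) \<in> D"
    and le: "\<And>y t. supported_on I y \<Longrightarrow> (\<lambda>i. y i + t * u i) \<in> D \<Longrightarrow> \<tau> y \<le> t"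
  shows "\<And>y z. supported_on I y \<Longrightarrow> supported_on I z \<Longrightarrow> \<tau> (\<lambda>i. y i + z i) \<le> \<tau> y + \<tau> z"
    and "\<And>y. supported_on I y \<Longrightarrow> \<tau> (\<lambda>i. - y i) \<le> - \<tau> y"
    and "\<And>y s. supported_on I y \<Longrightarrow> 0 < s \<Longrightarrow> \<tau> (\<lambda>i. s * y i) \<le> s * \<tau> y"
proof -
  note cone = coord_coneD[OF D[unfolded total_cone_def, THEN conjunct1]]
  show "\<tau> (\<lambda>i. y i + z i) \<le> \<tau> y + \<tau> z" if y: "supported_on I y" "supported_on I z" for y z
  proof (rule field_le_epsilon)
    fix \<epsilon> :: real assume "0 < \<epsilon>"
    then have "(\<lambda>i. (y i + (\<tau> y + \<epsilon>/2) * u i) + (z i + (\<tau> z + \<epsilon>/2) * u i)) \<in> D"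
      using gt y cone(2) by simp
    then show "\<tau> (\<lambda>i. y i + z i) \<le> \<tau> y + \<tau> z + \<epsilon>"
      using le[OF supported_on_intros(2)[OF y]] by (simp add: algebra_simps)
  qed
  show "\<tau> (\<lambda>i. - y i) \<le> - \<tau> y" if y: "supported_on I y" for y
  proof (rule ccontr)
    assume gt_neg: "\<not> \<tau> (\<lambda>i. - y i) \<le> - \<tau> y"
    define t where "t = (\<tau> y - \<tau> (\<lambda>i. - y i)) / 2"
    have "t < \<tau> y" "- t < \<tau> (\<lambda>i. - y i)" using gt_neg by (simp_all add: t_def field_simps)
    then have "(\<lambda>i. y i + t * u i) \<notin> D" using le[OF y] by fastforce
    moreover have "supported_on J (\<lambda>i. y i + t * u i)"
      using supported_on_mono[OF y \<open>I \<subseteq> J\<close>] cone(1)[OF \<open>u \<in> D\<close>] by (intro supported_on_intros)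
    ultimately have "(\<lambda>i. - (y i + t * u i)) \<in> D" using D by (auto simp: total_cone_def)
    then have "(\<lambda>i. - y i + (- t) * u i) \<in> D" by (simp add: algebra_simps)
    then have "\<tau> (\<lambda>i. - y i) \<le> - t" by (rule le[OF supported_on_intros(3)[OF y]])
    with \<open>- t < \<tau> (\<lambda>i. - y i)\<close> show False by simp
  qed
  show "\<tau> (\<lambda>i. s * y i) \<le> s * \<tau> y" if y: "supported_on I y" and s: "0 < s" for y s
  proof (rule field_le_epsilon)
    fix \<epsilon> :: real assume "0 < \<epsilon>"
    then have "\<tau> y < \<tau> y + \<epsilon> / s" using s by simp
    then have "(\<lambda>i. y i + (\<tau> y + \<epsilon> / s) * u i) \<in> D" by (rule gt[OF y])
    then have "(\<lambda>i. s * (y i + (\<tau> y + \<epsilon> / s) * u i)) \<in> D"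
      using cone(3) s by simp
    moreover have "(\<lambda>i. s * (y i + (\<tau> y + \<epsilon> / s) * u i)) = (\<lambda>i. s * y i + (s * \<tau> y + \<epsilon>) * u i)"
      using s by (auto simp: fun_eq_iff field_simps)
    ultimately have "(\<lambda>i. s * y i + (s * \<tau> y + \<epsilon>) * u i) \<in> D" by simp
    then show "\<tau> (\<lambda>i. s * y i) \<le> s * \<tau> y + \<epsilon>"
      by (rule le[OF supported_on_intros(4)[OF y]])
  qed
qed

text \<open>The boundary function of D along u is sublinear because D is a convex cone and
  antisymmetric because D is total, so it is linear.\<close>

lemma total_cone_section_linear:
  fixes D :: "('c \<Rightarrow> real) set"
  assumes I: "finite I" "I \<subseteq> J" and D: "total_cone J D"
    and u: "u \<in> D" "(\<lambda>i. - u i) \<notin> D"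
    and lift: "\<And>y. supported_on I y \<Longrightarrow> \<exists>t. (\<lambda>i. y i + t * u i) \<in> D"
  obtains c where "\<And>y t. supported_on I y \<Longrightarrow> (\<lambda>i. y i + t * u i) \<in> D \<Longrightarrow> (\<Sum>i\<in>I. y i * c i) \<le> t"
proof -
  obtain \<tau> where gt: "\<And>y t. supported_on I y \<Longrightarrow> \<tau> y < t \<Longrightarrow> (\<lambda>i. y i + t * u i) \<in> D"
    and le: "\<And>y t. supported_on I y \<Longrightarrow> (\<lambda>i. y i + t * u i) \<in> D \<Longrightarrow> \<tau> y \<le> t"
    using cone_section_infimum[OF _ u lift] D unfolding total_cone_def by blast
  note sublinear = cone_section_sublinear[OF I(2) D u(1) gt le]
  have additive: "\<tau> (\<lambda>i. y i + z i) = \<tau> y + \<tau> z" if "supported_on I y" "supported_on I z" for y z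
    using sublinear_odd_imp_linear(1)[of I \<tau>, OF sublinear that] .
  have homogeneous: "\<tau> (\<lambda>i. s * y i) = s * \<tau> y" if "supported_on I y" for y s
    using sublinear_odd_imp_linear(2)[of I \<tau>, OF sublinear that that] .
  show thesis
  proof (rule that)
    fix y t assume y: "supported_on I y" and "(\<lambda>i. y i + t * u i) \<in> D"
    then have "\<tau> y \<le> t" by (rule le)
    then show "(\<Sum>i\<in>I. y i * \<tau> (indicator {i})) \<le> t"
      using linear_functional_coordinates[of I \<tau>, OF I(1) additive homogeneous y] by linarith
  qed
qed

lemma total_cone_strict_axis:
  fixes D :: "('c \<Rightarrow> real) set"
  assumes D: "total_cone (insert j I) D"
    and proper: "\<exists>x. supported_on (insert j I) x \<and> x \<notin> D"
    and lift: "\<And>y. supported_on I y \<Longrightarrow> \<exists>t. (\<lambda>i. y i + t * indicator {j} i) \<in> D"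
  obtains \<sigma> :: real where "\<sigma> * \<sigma> = 1" "(\<lambda>i. \<sigma> * indicator {j} i) \<in> D"
    "(\<lambda>i. - (\<sigma> * indicator {j} i)) \<notin> D"
proof -
  note cone = coord_coneD[OF D[unfolded total_cone_def, THEN conjunct1]]
  let ?e = "indicator {j} :: 'c \<Rightarrow> real"
  have not_both: "\<not> (?e \<in> D \<and> (\<lambda>i. - ?e i) \<in> D)"
  proof
    assume both: "?e \<in> D \<and> (\<lambda>i. - ?e i) \<in> D"
    obtain x where x: "supported_on (insert j I) x" "x \<notin> D" using proper by blast
    have "supported_on I (x(j := 0))" using x(1) by (auto simp: supported_on_def)
    then obtain t where t: "(\<lambda>i. (x(j := 0)) i + t * ?e i) \<in> D" using lift by blast
    have "x \<in> D"
    proof (cases "t \<le> x j")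
      case True
      with both have "(\<lambda>i. (x j - t) * ?e i) \<in> D" using cone(3) by simp
      moreover have "(\<lambda>i. ((x(j := 0)) i + t * ?e i) + (x j - t) * ?e i) = x"
        by (auto simp: fun_eq_iff indicator_def)
      ultimately show ?thesis using cone(2)[OF t] by metis
    next
      case False
      with both have "(\<lambda>i. (t - x j) * - ?e i) \<in> D" using cone(3)[of "\<lambda>i. - ?e i"] by simp
      moreover have "(\<lambda>i. ((x(j := 0)) i + t * ?e i) + (t - x j) * - ?e i) = x"
        by (auto simp: fun_eq_iff indicator_def)
      ultimately show ?thesis using cone(2)[OF t] by metis
    qed
    with x show False by blast
  qed
  show thesis
  proof (cases "?e \<in> D")
    case True
    then show ?thesis using not_both that[of 1] by auto
  next
    case False
    moreover have "supported_on (insert j I) ?e" by (simp add: supported_on_def)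
    ultimately have "(\<lambda>i. - ?e i) \<in> D" using D by (auto simp: total_cone_def)
    then show ?thesis using False that[of "-1"] by auto
  qed
qed

lemma total_cone_halfspace_lift:
  fixes D :: "('c \<Rightarrow> real) set"
  assumes j: "j \<notin> I" and I: "finite I" and D: "total_cone (insert j I) D"
    and proper: "\<exists>x. supported_on (insert j I) x \<and> x \<notin> D"
    and lift: "\<And>y. supported_on I y \<Longrightarrow> \<exists>t. (\<lambda>i. y i + t * indicator {j} i) \<in> D"
  shows "\<exists>a. (\<exists>i\<in>insert j I. a i \<noteq> 0) \<and> (\<forall>x\<in>D. (\<Sum>i\<in>insert j I. a i * x i) \<le> 0)"
proof -
  note cone = coord_coneD[OF D[unfolded total_cone_def, THEN conjunct1]]
  let ?e = "indicator {j} :: 'c \<Rightarrow> real"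
  obtain \<sigma> :: real where \<sigma>: "\<sigma> * \<sigma> = 1" "(\<lambda>i. \<sigma> * ?e i) \<in> D" "(\<lambda>i. - (\<sigma> * ?e i)) \<notin> D"
    using total_cone_strict_axis[OF D proper lift] by blast
  define u where "u i = \<sigma> * ?e i" for i
  have lift_u: "\<exists>t. (\<lambda>i. y i + t * u i) \<in> D" if y: "supported_on I y" for y
  proof -
    obtain t where "(\<lambda>i. y i + t * ?e i) \<in> D" using lift[OF y] by blast
    moreover have "(\<lambda>i. y i + (\<sigma> * t) * u i) = (\<lambda>i. y i + t * ?e i)"
      using \<sigma>(1) by (simp add: u_def fun_eq_iff algebra_simps)
    ultimately show ?thesis by metis
  qed
  obtain c where c: "\<And>y t. supported_on I y \<Longrightarrow> (\<lambda>i. y i + t * u i) \<in> D \<Longrightarrow> (\<Sum>i\<in>I. y i * c i) \<le> t"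
    using total_cone_section_linear[OF I subset_insertI D _ _ lift_u] \<sigma>(2,3) unfolding u_def by blast
  define a where "a i = (if i = j then - \<sigma> else c i)" for i
  show ?thesis
  proof (intro exI conjI ballI)
    show "\<exists>i\<in>insert j I. a i \<noteq> 0" using \<sigma>(1) by (auto simp: a_def)
    fix x assume x: "x \<in> D"
    have "supported_on I (x(j := 0))" using cone(1)[OF x] by (auto simp: supported_on_def)
    moreover have "(\<lambda>i. (x(j := 0)) i + (\<sigma> * x j) * u i) = x"
      using \<sigma>(1) by (auto simp: u_def fun_eq_iff indicator_def)
    ultimately have "(\<Sum>i\<in>I. (x(j := 0)) i * c i) \<le> \<sigma> * x j" using c x by metis
    moreover have "(\<Sum>i\<in>I. (x(j := 0)) i * c i) = (\<Sum>i\<in>I. a i * x i)"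
      using j by (intro sum.cong) (auto simp: a_def)
    ultimately show "(\<Sum>i\<in>insert j I. a i * x i) \<le> 0" using j I by (simp add: a_def)
  qed
qed

lemma total_cone_projection:
  assumes D: "total_cone (insert j I) D"
  shows "total_cone I {y. supported_on I y \<and> (\<exists>t. (\<lambda>i. y i + t * indicator {j} i) \<in> D)}"
    (is "total_cone I ?E")
  unfolding total_cone_def coord_cone_def
proof (intro conjI ballI allI impI)
  note cone = coord_coneD[OF D[unfolded total_cone_def, THEN conjunct1]]
  fix y z assume "y \<in> ?E" "z \<in> ?E"
  then obtain s t where st: "(\<lambda>i. y i + s * indicator {j} i) \<in> D" "(\<lambda>i. z i + t * indicator {j} i) \<in> D"
    and yz: "supported_on I y" "supported_on I z" by auto
  from cone(2)[OF st] have "(\<lambda>i. (y i + z i) + (s + t) * indicator {j} i) \<in> D"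
    by (simp add: algebra_simps)
  with yz show "(\<lambda>i. y i + z i) \<in> ?E" by (auto intro: supported_on_intros)
next
  note cone = coord_coneD[OF D[unfolded total_cone_def, THEN conjunct1]]
  fix y and r :: real assume "y \<in> ?E" "0 \<le> r"
  then obtain t where t: "(\<lambda>i. y i + t * indicator {j} i) \<in> D" and y: "supported_on I y" by auto
  from cone(3)[OF t \<open>0 \<le> r\<close>] have "(\<lambda>i. r * y i + (r * t) * indicator {j} i) \<in> D"
    by (simp add: algebra_simps)
  with y show "(\<lambda>i. r * y i) \<in> ?E" by (auto intro: supported_on_intros)
next
  fix y assume y: "supported_on I y"
  then have "y \<in> D \<or> (\<lambda>i. - y i) \<in> D"
    using D supported_on_mono[OF y subset_insertI] by (simp add: total_cone_def)
  then show "y \<in> ?E \<or> (\<lambda>i. - y i) \<in> ?E"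
  proof
    assume "y \<in> D"
    then have "y \<in> ?E" using y by (auto intro!: exI[of _ 0])
    then show ?thesis ..
  next
    assume "(\<lambda>i. - y i) \<in> D"
    then have "(\<lambda>i. - y i) \<in> ?E" using supported_on_intros(3)[OF y] by (auto intro!: exI[of _ 0])
    then show ?thesis ..
  qed
qed (simp add: supported_on_def)

lemma total_cone_halfspace:
  assumes "finite I" and "total_cone I D" and "\<exists>x. supported_on I x \<and> x \<notin> D"
  shows "\<exists>a. (\<exists>i\<in>I. a i \<noteq> 0) \<and> (\<forall>x\<in>D. (\<Sum>i\<in>I. a i * x i) \<le> 0)"
  using assms
proof (induction I arbitrary: D rule: finite_induct)
  case empty
  then show ?case by (auto simp: total_cone_def supported_on_def)
next
  case (insert j I D)
  define E where "E = {y. supported_on I y \<and> (\<exists>t. (\<lambda>i. y i + t * indicator {j} i) \<in> D)}"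
  show ?case
  proof (cases "\<exists>y. supported_on I y \<and> y \<notin> E")
    case False
    then show ?thesis using total_cone_halfspace_lift[OF insert(2,1,4,5)] by (auto simp: E_def)
  next
    case True
    obtain a where a: "\<exists>i\<in>I. a i \<noteq> 0" "\<forall>y\<in>E. (\<Sum>i\<in>I. a i * y i) \<le> 0"
      using insert.IH[OF total_cone_projection[OF insert(4), folded E_def] True] by blast
    show ?thesis
    proof (intro exI[of _ "a(j := 0)"] conjI ballI)
      show "\<exists>i\<in>insert j I. (a(j := 0)) i \<noteq> 0" using a(1) insert(2) by auto
      fix x assume x: "x \<in> D"
      have "supported_on I (x(j := 0))"
        using x insert(4) by (auto simp: total_cone_def coord_cone_def supported_on_def)
      moreover have "(\<lambda>i. (x(j := 0)) i + x j * indicator {j} i) = x"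
        by (auto simp: fun_eq_iff indicator_def)
      ultimately have "x(j := 0) \<in> E" using x by (auto simp: E_def intro!: exI[of _ "x j"])
      with a(2) have "(\<Sum>i\<in>I. a i * (x(j := 0)) i) \<le> 0" by (rule bspec)
      moreover have "(\<Sum>i\<in>insert j I. (a(j := 0)) i * x i) = (\<Sum>i\<in>I. a i * (x(j := 0)) i)"
        using insert(1,2) by (auto intro!: sum.cong)
      ultimately show "(\<Sum>i\<in>insert j I. (a(j := 0)) i * x i) \<le> 0" by simp
    qed
  qed
qed

section \<open>Caratheodory reduction of finitely supported measures\<close>

lemma homogeneous_system_nontrivial_solution:
  fixes h :: "'c \<Rightarrow> 'a \<Rightarrow> real"
  assumes "finite I" "finite X" "card I < card X"
  shows "\<exists>\<beta>. (\<exists>x\<in>X. \<beta> x \<noteq> 0) \<and> (\<forall>i\<in>I. (\<Sum>x\<in>X. \<beta> x * h i x) = 0)"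
  using assms
proof (induction I arbitrary: X h rule: finite_induct)
  case empty
  then show ?case by (intro exI[of _ "\<lambda>_. 1"]) (auto simp: card_gt_0_iff)
next
  case (insert i0 I X h)
  show ?case
  proof (cases "\<forall>x\<in>X. h i0 x = 0")
    case True
    then show ?thesis using insert.IH[OF insert.prems(1), of h] insert by auto
  next
    case False
    then obtain x0 where x0: "x0 \<in> X" "h i0 x0 \<noteq> 0" by blast
    \<comment> \<open>Gaussian elimination: use the equation i0 to eliminate the unknown at x0.\<close>
    define h' where "h' i x = h i x - h i x0 * h i0 x / h i0 x0" for i x
    have X': "finite (X - {x0})" "card I < card (X - {x0})"
      using insert x0 by auto
    obtain \<beta>' where \<beta>': "\<exists>x\<in>X - {x0}. \<beta>' x \<noteq> 0" "\<forall>i\<in>I. (\<Sum>x\<in>X - {x0}. \<beta>' x * h' i x) = 0"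
      using insert.IH[OF X'] by blast
    define c where "c = - (\<Sum>x\<in>X - {x0}. \<beta>' x * h i0 x) / h i0 x0"
    have split: "(\<Sum>x\<in>X. (\<beta>'(x0 := c)) x * h i x) = c * h i x0 + (\<Sum>x\<in>X - {x0}. \<beta>' x * h i x)" for i
      using insert.prems(1) x0(1) by (simp add: sum.remove)
    show ?thesis
    proof (intro exI[of _ "\<beta>'(x0 := c)"] conjI ballI)
      show "\<exists>x\<in>X. (\<beta>'(x0 := c)) x \<noteq> 0" using \<beta>'(1) by auto
      fix i assume "i \<in> insert i0 I"
      then consider "i = i0" | "i \<in> I" by blast
      then show "(\<Sum>x\<in>X. (\<beta>'(x0 := c)) x * h i x) = 0"
      proof cases
        case 1
        then show ?thesis using split[of i0] x0 by (simp add: c_def)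
      next
        case 2
        have "0 = (\<Sum>x\<in>X - {x0}. \<beta>' x * h i x) - (h i x0 / h i0 x0) * (\<Sum>x\<in>X - {x0}. \<beta>' x * h i0 x)"
          using \<beta>'(2) 2 by (simp add: h'_def sum_subtractf sum_distrib_left algebra_simps)
        also have "\<dots> = (\<Sum>x\<in>X. (\<beta>'(x0 := c)) x * h i x)"
          using split[of i] x0 by (simp add: c_def field_simps)
        finally show ?thesis by simp
      qed
    qed
  qed
qed

lemma affine_dependence:
  fixes g :: "'c \<Rightarrow> 'a \<Rightarrow> real"
  assumes "finite I" "finite X" "card I + 1 < card X"
  obtains \<beta> where "\<exists>x\<in>X. \<beta> x \<noteq> 0" "(\<Sum>x\<in>X. \<beta> x) = 0" "\<forall>i\<in>I. (\<Sum>x\<in>X. \<beta> x * g i x) = 0"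
proof -
  define h where "h i x = (case i of None \<Rightarrow> 1 | Some j \<Rightarrow> g j x)" for i x
  have "finite (insert None (Some ` I))" "card (insert None (Some ` I)) < card X"
    using assms by (auto simp: card_image)
  then obtain \<beta> where "\<exists>x\<in>X. \<beta> x \<noteq> 0" "\<forall>i\<in>insert None (Some ` I). (\<Sum>x\<in>X. \<beta> x * h i x) = 0"
    using homogeneous_system_nontrivial_solution[OF _ assms(2)] by blast
  then show thesis by (intro that[of \<beta>]) (auto simp: h_def)
qed

lemma sum_zero_exists_pos:
  fixes \<beta> :: "'a \<Rightarrow> real"
  assumes "finite X" "\<exists>x\<in>X. \<beta> x \<noteq> 0" "(\<Sum>x\<in>X. \<beta> x) = 0"
  shows "\<exists>x\<in>X. 0 < \<beta> x"
proof (rule ccontr)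
  assume "\<not> (\<exists>x\<in>X. 0 < \<beta> x)"
  then have "\<forall>x\<in>X. 0 \<le> - \<beta> x" by auto
  moreover have "(\<Sum>x\<in>X. - \<beta> x) = 0" using assms(3) by (simp add: sum_negf)
  ultimately have "\<forall>x\<in>X. - \<beta> x = 0" using sum_nonneg_eq_0_iff[OF assms(1), of "\<lambda>x. - \<beta> x"] by simp
  with assms(2) show False by simp
qed

lemma caratheodory_step:
  fixes g :: "'c \<Rightarrow> 'a \<Rightarrow> real"
  assumes I: "finite I" and X: "finite X" "card I + 1 < card X" and \<alpha>: "\<forall>x\<in>X. 0 \<le> \<alpha> x"
  obtains x1 \<alpha>1 where "x1 \<in> X" "\<forall>x\<in>X - {x1}. 0 \<le> \<alpha>1 x" "sum \<alpha>1 (X - {x1}) = sum \<alpha> X"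
    "\<forall>i\<in>I. (\<Sum>x\<in>X - {x1}. \<alpha>1 x * g i x) = (\<Sum>x\<in>X. \<alpha> x * g i x)"
proof -
  obtain \<beta> where \<beta>: "\<exists>x\<in>X. \<beta> x \<noteq> 0" "(\<Sum>x\<in>X. \<beta> x) = 0" "\<forall>i\<in>I. (\<Sum>x\<in>X. \<beta> x * g i x) = 0"
    using affine_dependence[OF I X] by blast
  define P where "P = {x\<in>X. 0 < \<beta> x}"
  have "P \<noteq> {}" using sum_zero_exists_pos[OF X(1) \<beta>(1,2)] by (auto simp: P_def)
  \<comment> \<open>Move along -\<beta> until the first weight hits zero.\<close>
  define t where "t = Min ((\<lambda>x. \<alpha> x / \<beta> x) ` P)"
  have "t \<in> (\<lambda>x. \<alpha> x / \<beta> x) ` P"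
    unfolding t_def using X(1) \<open>P \<noteq> {}\<close> by (intro Min_in) (auto simp: P_def)
  then obtain x1 where x1: "x1 \<in> P" "t = \<alpha> x1 / \<beta> x1" by blast
  have t_le: "t \<le> \<alpha> x / \<beta> x" if "x \<in> P" for x
    unfolding t_def using X(1) that by (intro Min_le) (auto simp: P_def)
  have "0 \<le> t" using x1 \<alpha> by (auto simp: P_def)
  define \<alpha>1 where "\<alpha>1 x = \<alpha> x - t * \<beta> x" for x
  have \<alpha>1_nonneg: "0 \<le> \<alpha>1 x" if "x \<in> X" for x
  proof (cases "0 < \<beta> x")
    case True
    then show ?thesis using t_le[of x] that by (auto simp: \<alpha>1_def P_def field_simps)
  next
    case False
    then have "t * \<beta> x \<le> 0" using \<open>0 \<le> t\<close> by (simp add: mult_nonneg_nonpos)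
    moreover have "0 \<le> \<alpha> x" using \<alpha> that by blast
    ultimately show ?thesis by (simp add: \<alpha>1_def)
  qed
  have "x1 \<in> X" "\<alpha>1 x1 = 0" using x1 by (auto simp: \<alpha>1_def P_def)
  have drop_x1: "(\<Sum>x\<in>X - {x1}. \<alpha>1 x * f x) = (\<Sum>x\<in>X. \<alpha> x * f x) - t * (\<Sum>x\<in>X. \<beta> x * f x)" for f
  proof -
    have "(\<Sum>x\<in>X. \<alpha>1 x * f x) = \<alpha>1 x1 * f x1 + (\<Sum>x\<in>X - {x1}. \<alpha>1 x * f x)"
      by (rule sum.remove[OF X(1) \<open>x1 \<in> X\<close>])
    moreover have "(\<Sum>x\<in>X. \<alpha>1 x * f x) = (\<Sum>x\<in>X. \<alpha> x * f x) - t * (\<Sum>x\<in>X. \<beta> x * f x)"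
      by (simp add: \<alpha>1_def left_diff_distrib sum_subtractf sum_distrib_left mult.assoc)
    ultimately show ?thesis using \<open>\<alpha>1 x1 = 0\<close> by simp
  qed
  show thesis
  proof (rule that[of x1 \<alpha>1])
    show "x1 \<in> X" by fact
    show "\<forall>x\<in>X - {x1}. 0 \<le> \<alpha>1 x" using \<alpha>1_nonneg by blast
    show "sum \<alpha>1 (X - {x1}) = sum \<alpha> X" using drop_x1[of "\<lambda>_. 1"] \<beta>(2) by simp
    show "\<forall>i\<in>I. (\<Sum>x\<in>X - {x1}. \<alpha>1 x * g i x) = (\<Sum>x\<in>X. \<alpha> x * g i x)"
      using drop_x1 \<beta>(3) by simp
  qed
qed

lemma caratheodory_weights:
  fixes g :: "'c \<Rightarrow> 'a \<Rightarrow> real"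
  assumes I: "finite I" and X: "finite X" and \<alpha>: "\<forall>x\<in>X. 0 \<le> \<alpha> x"
  shows "\<exists>Y \<alpha>'. Y \<subseteq> X \<and> card Y \<le> card I + 1 \<and> (\<forall>x\<in>Y. 0 \<le> \<alpha>' x) \<and> sum \<alpha>' Y = sum \<alpha> X \<and>
      (\<forall>i\<in>I. (\<Sum>x\<in>Y. \<alpha>' x * g i x) = (\<Sum>x\<in>X. \<alpha> x * g i x))"
  using X \<alpha>
proof (induction "card X" arbitrary: X \<alpha> rule: less_induct)
  case (less X \<alpha>)
  show ?case
  proof (cases "card X \<le> card I + 1")
    case True
    then show ?thesis using less.prems by blast
  next
    case False
    then have "card I + 1 < card X" by simp
    then obtain x1 \<alpha>1 where x1: "x1 \<in> X" "\<forall>x\<in>X - {x1}. 0 \<le> \<alpha>1 x" "sum \<alpha>1 (X - {x1}) = sum \<alpha> X"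
      "\<forall>i\<in>I. (\<Sum>x\<in>X - {x1}. \<alpha>1 x * g i x) = (\<Sum>x\<in>X. \<alpha> x * g i x)"
      by (rule caratheodory_step[OF I less.prems(1) _ less.prems(2)])
    have card_lt: "card (X - {x1}) < card X" using x1(1) less.prems(1) by (rule card_Diff1_less[rotated])
    have fin: "finite (X - {x1})" using less.prems(1) by simp
    obtain Y \<alpha>' where Y: "Y \<subseteq> X - {x1}" "card Y \<le> card I + 1" "\<forall>x\<in>Y. 0 \<le> \<alpha>' x"
      "sum \<alpha>' Y = sum \<alpha>1 (X - {x1})"
      "\<forall>i\<in>I. (\<Sum>x\<in>Y. \<alpha>' x * g i x) = (\<Sum>x\<in>X - {x1}. \<alpha>1 x * g i x)"
      using less.hyps[OF card_lt fin x1(2)] by blast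
    have "Y \<subseteq> X" using Y(1) by blast
    with Y(2-5) x1(3,4) show ?thesis by (intro exI[of _ Y] exI[of _ \<alpha>']) simp
  qed
qed

section \<open>Richter's theorem\<close>

definition in_moment_hull :: "'a set \<Rightarrow> ('c \<Rightarrow> 'a \<Rightarrow> real) \<Rightarrow> 'c set \<Rightarrow> ('c \<Rightarrow> real) \<Rightarrow> bool" where
  "in_moment_hull S g I v \<longleftrightarrow> (\<exists>X \<alpha>. finite X \<and> X \<subseteq> S \<and> (\<forall>x\<in>X. 0 \<le> \<alpha> x) \<and> sum \<alpha> X = 1 \<and>
      (\<forall>i\<in>I. (\<Sum>x\<in>X. \<alpha> x * g i x) = v i))"

lemma in_moment_hull_cong: "in_moment_hull S g I c \<Longrightarrow> (\<forall>i\<in>I. c i = c' i) \<Longrightarrow> in_moment_hull S g I c'"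
  unfolding in_moment_hull_def by metis

lemma in_moment_hull_point: "x \<in> S \<Longrightarrow> in_moment_hull S g I (\<lambda>i. g i x)"
  unfolding in_moment_hull_def by (intro exI[of _ "{x}"] exI[of _ "\<lambda>_. 1"]) auto

lemma in_moment_hull_convex:
  assumes c1: "in_moment_hull S g I c1" and c2: "in_moment_hull S g I c2" and l: "0 \<le> l" "l \<le> 1"
  shows "in_moment_hull S g I (\<lambda>i. l * c1 i + (1 - l) * c2 i)"
proof -
  obtain X1 \<alpha>1 where X1: "finite X1" "X1 \<subseteq> S" "\<forall>x\<in>X1. 0 \<le> \<alpha>1 x" "sum \<alpha>1 X1 = 1"
    "\<forall>i\<in>I. (\<Sum>x\<in>X1. \<alpha>1 x * g i x) = c1 i" using c1 unfolding in_moment_hull_def by blast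
  obtain X2 \<alpha>2 where X2: "finite X2" "X2 \<subseteq> S" "\<forall>x\<in>X2. 0 \<le> \<alpha>2 x" "sum \<alpha>2 X2 = 1"
    "\<forall>i\<in>I. (\<Sum>x\<in>X2. \<alpha>2 x * g i x) = c2 i" using c2 unfolding in_moment_hull_def by blast
  define \<alpha> where "\<alpha> x = l * (if x \<in> X1 then \<alpha>1 x else 0) + (1 - l) * (if x \<in> X2 then \<alpha>2 x else 0)" for x
  have restrict: "(\<Sum>x\<in>X1 \<union> X2. (if x \<in> A then \<beta> x * f x else 0)) = (\<Sum>x\<in>A. \<beta> x * f x)"
    if "A \<subseteq> X1 \<union> X2" for A \<beta> f
    using sum.inter_restrict[of "X1 \<union> X2" "\<lambda>x. \<beta> x * f x" A] X1(1) X2(1) that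
    by (simp add: Int_absorb1)
  have mix: "(\<Sum>x\<in>X1 \<union> X2. \<alpha> x * f x) = l * (\<Sum>x\<in>X1. \<alpha>1 x * f x) + (1 - l) * (\<Sum>x\<in>X2. \<alpha>2 x * f x)"
    for f :: "'a \<Rightarrow> real"
  proof -
    have "(\<Sum>x\<in>X1 \<union> X2. \<alpha> x * f x) = (\<Sum>x\<in>X1 \<union> X2.
        l * (if x \<in> X1 then \<alpha>1 x * f x else 0) + (1 - l) * (if x \<in> X2 then \<alpha>2 x * f x else 0))"
      by (intro sum.cong refl) (auto simp: \<alpha>_def algebra_simps)
    also have "\<dots> = l * (\<Sum>x\<in>X1 \<union> X2. (if x \<in> X1 then \<alpha>1 x * f x else 0))
        + (1 - l) * (\<Sum>x\<in>X1 \<union> X2. (if x \<in> X2 then \<alpha>2 x * f x else 0))"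
      by (simp only: sum.distrib sum_distrib_left)
    finally show ?thesis using restrict[of X1 \<alpha>1 f] restrict[of X2 \<alpha>2 f] by simp
  qed
  show ?thesis
    unfolding in_moment_hull_def
  proof (intro exI[of _ "X1 \<union> X2"] exI[of _ \<alpha>] conjI ballI)
    show "finite (X1 \<union> X2)" "X1 \<union> X2 \<subseteq> S" using X1 X2 by auto
    show "0 \<le> \<alpha> x" for x using X1(3) X2(3) l by (simp add: \<alpha>_def)
    show "sum \<alpha> (X1 \<union> X2) = 1" using mix[of "\<lambda>_. 1"] X1(4) X2(4) by simp
    show "(\<Sum>x\<in>X1 \<union> X2. \<alpha> x * g i x) = l * c1 i + (1 - l) * c2 i" if "i \<in> I" for i
      using mix[of "g i"] X1(5) X2(5) that by simp
  qed
qed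

lemma scaled_convex_combination:
  fixes s1 s2 :: real
  assumes "0 < s1 + s2"
  shows "(s1 + s2) * (s1 / (s1 + s2) * a + (1 - s1 / (s1 + s2)) * b - v) = s1 * (a - v) + s2 * (b - v)"
proof -
  have k1: "(s1 + s2) * (s1 / (s1 + s2)) = s1" and k2: "(s1 + s2) * (1 - s1 / (s1 + s2)) = s2"
    using assms by (simp_all add: field_simps)
  have "(s1 + s2) * (s1 / (s1 + s2) * a + (1 - s1 / (s1 + s2)) * b - v)
      = ((s1 + s2) * (s1 / (s1 + s2))) * a + ((s1 + s2) * (1 - s1 / (s1 + s2))) * b - (s1 + s2) * v"
    by (simp add: algebra_simps)
  also have "\<dots> = s1 * (a - v) + s2 * (b - v)" unfolding k1 k2 by (simp add: algebra_simps)
  finally show ?thesis .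
qed

definition moment_cone :: "'a set \<Rightarrow> ('c \<Rightarrow> 'a \<Rightarrow> real) \<Rightarrow> 'c set \<Rightarrow> ('c \<Rightarrow> real) \<Rightarrow> ('c \<Rightarrow> real) set" where
  "moment_cone S g I v =
     {z. \<exists>c s. in_moment_hull S g I c \<and> 0 \<le> s \<and> z = (\<lambda>i. if i \<in> I then s * (c i - v i) else 0)}"

lemma moment_coneI:
  "in_moment_hull S g I c \<Longrightarrow> 0 \<le> s \<Longrightarrow> (\<lambda>i. if i \<in> I then s * (c i - v i) else 0) \<in> moment_cone S g I v"
  unfolding moment_cone_def by blast

lemma coord_cone_moment_cone: "coord_cone I (moment_cone S g I v)"
  unfolding coord_cone_def
proof (intro conjI ballI allI impI)
  fix z assume "z \<in> moment_cone S g I v"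
  then show "supported_on I z" by (auto simp: moment_cone_def supported_on_def)
next
  fix z1 z2 assume "z1 \<in> moment_cone S g I v" "z2 \<in> moment_cone S g I v"
  then obtain c1 s1 c2 s2 where c: "in_moment_hull S g I c1" "0 \<le> s1" "in_moment_hull S g I c2" "0 \<le> s2"
    and z: "z1 = (\<lambda>i. if i \<in> I then s1 * (c1 i - v i) else 0)" "z2 = (\<lambda>i. if i \<in> I then s2 * (c2 i - v i) else 0)"
    unfolding moment_cone_def by blast
  show "(\<lambda>i. z1 i + z2 i) \<in> moment_cone S g I v"
  proof (cases "s1 + s2 = 0")
    case True
    then have "s1 = 0" "s2 = 0" using c by auto
    then have "(\<lambda>i. z1 i + z2 i) = (\<lambda>i. if i \<in> I then 0 * (c1 i - v i) else 0)"
      by (simp add: z fun_eq_iff)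
    then show ?thesis using moment_coneI[OF c(1), of 0] by simp
  next
    case False
    then have sp: "0 < s1 + s2" using c by linarith
    define l where "l = s1 / (s1 + s2)"
    have "(\<lambda>i. z1 i + z2 i) = (\<lambda>i. if i \<in> I then (s1 + s2) * ((l * c1 i + (1 - l) * c2 i) - v i) else 0)"
      using scaled_convex_combination[OF sp] by (simp add: z l_def fun_eq_iff)
    moreover have "in_moment_hull S g I (\<lambda>i. l * c1 i + (1 - l) * c2 i)"
      using c sp by (intro in_moment_hull_convex) (auto simp: l_def)
    ultimately show ?thesis using moment_coneI[of S g I _ "s1 + s2"] sp by simp
  qed
next
  fix z and s :: real assume "z \<in> moment_cone S g I v" "0 \<le> s"
  then obtain c s1 where c: "in_moment_hull S g I c" "0 \<le> s1"
    and z: "z = (\<lambda>i. if i \<in> I then s1 * (c i - v i) else 0)"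
    unfolding moment_cone_def by blast
  have "(\<lambda>i. s * z i) = (\<lambda>i. if i \<in> I then (s * s1) * (c i - v i) else 0)"
    by (simp add: z fun_eq_iff)
  then show "(\<lambda>i. s * z i) \<in> moment_cone S g I v"
    using moment_coneI[OF c(1), of "s * s1"] c(2) \<open>0 \<le> s\<close> by simp
qed

lemma total_cone_moment_cone:
  assumes "S \<noteq> {}"
    and line: "\<And>w. supported_on I w \<Longrightarrow> \<exists>i\<in>I. w i \<noteq> 0 \<Longrightarrow>
      \<exists>c t. in_moment_hull S g I c \<and> t \<noteq> 0 \<and> (\<forall>i\<in>I. c i - v i = t * w i)"
  shows "total_cone I (moment_cone S g I v)"
  unfolding total_cone_def
proof (intro conjI allI impI coord_cone_moment_cone)
  fix w assume w: "supported_on I w"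
  show "w \<in> moment_cone S g I v \<or> (\<lambda>i. - w i) \<in> moment_cone S g I v"
  proof (cases "\<exists>i\<in>I. w i \<noteq> 0")
    case False
    obtain x where "x \<in> S" using assms(1) by blast
    have "w = (\<lambda>i. if i \<in> I then 0 * (g i x - v i) else 0)"
      using w False by (auto simp: supported_on_def fun_eq_iff)
    then have "w \<in> moment_cone S g I v"
      using moment_coneI[OF in_moment_hull_point[OF \<open>x \<in> S\<close>], where s = 0] by simp
    then show ?thesis ..
  next
    case True
    then obtain c t where c: "in_moment_hull S g I c" "t \<noteq> 0" "\<forall>i\<in>I. c i - v i = t * w i"
      using line[OF w] by blast
    have "w = (\<lambda>i. if i \<in> I then (1 / t) * (c i - v i) else 0)"
      "(\<lambda>i. - w i) = (\<lambda>i. if i \<in> I then (- 1 / t) * (c i - v i) else 0)"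
      using w c by (auto simp: supported_on_def fun_eq_iff)
    then show ?thesis
      using moment_coneI[OF c(1), of "1 / t"] moment_coneI[OF c(1), of "- 1 / t"] by (cases "0 < t") auto
  qed
qed

lemma moment_cone_proper:
  assumes nh: "\<not> in_moment_hull S g I v" and j: "j \<in> I"
  shows "\<exists>z. supported_on I z \<and> z \<notin> moment_cone S g I v"
proof (rule ccontr)
  assume "\<not> (\<exists>z. supported_on I z \<and> z \<notin> moment_cone S g I v)"
  moreover have "supported_on I (indicator {j})" "supported_on I (\<lambda>i. - indicator {j} i)"
    using j by (auto simp: supported_on_def indicator_def)
  ultimately have "indicator {j} \<in> moment_cone S g I v" "(\<lambda>i. - indicator {j} i) \<in> moment_cone S g I v"
    by blast+
  then obtain c1 s1 c2 s2 where c: "in_moment_hull S g I c1" "0 \<le> s1" "in_moment_hull S g I c2" "0 \<le> s2"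
    and e: "indicator {j} = (\<lambda>i. if i \<in> I then s1 * (c1 i - v i) else 0)"
      "(\<lambda>i. - indicator {j} i) = (\<lambda>i. if i \<in> I then s2 * (c2 i - v i) else 0)"
    unfolding moment_cone_def by blast
  have opposite: "s1 * (c1 i - v i) + s2 * (c2 i - v i) = 0" if "i \<in> I" for i
    using fun_cong[OF e(1), of i] fun_cong[OF e(2), of i] that by simp
  have "s1 * (c1 j - v j) = 1" using fun_cong[OF e(1), of j] j by simp
  then have sp: "0 < s1 + s2" using c(2,4) by (cases "s1 = 0") auto
  define l where "l = s1 / (s1 + s2)"
  have "in_moment_hull S g I (\<lambda>i. l * c1 i + (1 - l) * c2 i)"
    using c sp by (intro in_moment_hull_convex) (auto simp: l_def)
  moreover have "l * c1 i + (1 - l) * c2 i = v i" if "i \<in> I" for i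
  proof -
    have "(s1 + s2) * (l * c1 i + (1 - l) * c2 i - v i) = 0"
      unfolding l_def using scaled_convex_combination[OF sp, of "c1 i" "c2 i" "v i"] opposite[OF that]
      by linarith
    then show ?thesis using sp by simp
  qed
  ultimately show False using nh in_moment_hull_cong by blast
qed

lemma moment_hull_meets_line:
  fixes \<mu> :: "'a measure"
  assumes intg: "\<forall>i\<in>I. integrable \<mu> (g i)" and j: "j \<in> I" "w j \<noteq> 0"
    and nh: "\<not> in_moment_hull S g I (\<lambda>i. \<integral>x. g i x \<partial>\<mu>)"
    and projected: "in_moment_hull S (\<lambda>i x. g i x - (w i / w j) * g j x) (I - {j})
      (\<lambda>i. \<integral>x. g i x - (w i / w j) * g j x \<partial>\<mu>)"
  shows "\<exists>c t. in_moment_hull S g I c \<and> t \<noteq> 0 \<and> (\<forall>i\<in>I. c i - (\<integral>x. g i x \<partial>\<mu>) = t * w i)"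
proof -
  define v where "v = (\<lambda>i. \<integral>x. g i x \<partial>\<mu>)"
  obtain X \<alpha> where X: "finite X" "X \<subseteq> S" "\<forall>x\<in>X. 0 \<le> \<alpha> x" "sum \<alpha> X = 1"
    "\<forall>i\<in>I - {j}. (\<Sum>x\<in>X. \<alpha> x * (g i x - (w i / w j) * g j x)) = (\<integral>x. g i x - (w i / w j) * g j x \<partial>\<mu>)"
    using projected unfolding in_moment_hull_def by blast
  define c where "c i = (\<Sum>x\<in>X. \<alpha> x * g i x)" for i
  have hull: "in_moment_hull S g I c" unfolding in_moment_hull_def c_def using X(1-4) by blast
  have rel: "c i - v i = (w i / w j) * (c j - v j)" if "i \<in> I" for i
  proof (cases "i = j")
    case False
    have "(\<Sum>x\<in>X. \<alpha> x * (g i x - (w i / w j) * g j x)) = c i - (w i / w j) * c j"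
      by (simp add: c_def right_diff_distrib sum_subtractf sum_distrib_left mult.left_commute)
    moreover have "(\<integral>x. g i x - (w i / w j) * g j x \<partial>\<mu>) = v i - (w i / w j) * v j"
      unfolding v_def by (subst Bochner_Integration.integral_diff) (use intg that j(1) in auto)
    ultimately have "c i - (w i / w j) * c j = v i - (w i / w j) * v j" using X(5) that False by simp
    moreover have "(w i / w j) * (c j - v j) = (w i / w j) * c j - (w i / w j) * v j"
      by (rule right_diff_distrib)
    ultimately show ?thesis by linarith
  qed (use j(2) in simp)
  have "c j \<noteq> v j"
  proof
    assume "c j = v j"
    then have "\<forall>i\<in>I. c i = v i" using rel by simp
    then have "in_moment_hull S g I v" using in_moment_hull_cong[OF hull] by blast
    with nh show False by (simp add: v_def)
  qed
  moreover have "w i / w j * (c j - v j) = (c j - v j) / w j * w i" for i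
    by (metis times_divide_eq_left mult.commute)
  ultimately show ?thesis
    using hull rel j(2) by (intro exI[of _ c] exI[of _ "(c j - v j) / w j"]) (simp add: v_def)
qed

lemma moment_cone_halfspace_le:
  assumes "\<forall>z\<in>moment_cone S g I v. (\<Sum>i\<in>I. a i * z i) \<le> 0" and "x \<in> S"
  shows "(\<Sum>i\<in>I. a i * g i x) \<le> (\<Sum>i\<in>I. a i * v i)"
proof -
  have "(\<lambda>i. if i \<in> I then 1 * (g i x - v i) else 0) \<in> moment_cone S g I v"
    by (rule moment_coneI[OF in_moment_hull_point[OF \<open>x \<in> S\<close>]]) simp
  from assms(1)[rule_format, OF this] have "(\<Sum>i\<in>I. a i * (g i x - v i)) \<le> 0" by simp
  then show ?thesis by (simp add: right_diff_distrib sum_subtractf)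
qed

lemma AE_supporting_face:
  fixes \<mu> :: "'a measure" and g :: "'c \<Rightarrow> 'a \<Rightarrow> real"
  assumes P: "prob_space \<mu>" and intg: "\<forall>i\<in>I. integrable \<mu> (g i)" and S: "AE x in \<mu>. x \<in> S"
    and le: "\<forall>x\<in>S. (\<Sum>i\<in>I. a i * g i x) \<le> (\<Sum>i\<in>I. a i * (\<integral>y. g i y \<partial>\<mu>))"
  shows "AE x in \<mu>. x \<in> S \<and> (\<Sum>i\<in>I. a i * g i x) = (\<Sum>i\<in>I. a i * (\<integral>y. g i y \<partial>\<mu>))"
proof -
  interpret prob_space \<mu> by (rule P)
  define L where "L = (\<lambda>x. \<Sum>i\<in>I. a i * g i x)"
  define c where "c = (\<Sum>i\<in>I. a i * (\<integral>y. g i y \<partial>\<mu>))"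
  have "integrable \<mu> L" unfolding L_def using intg by (intro Bochner_Integration.integrable_sum integrable_mult_right) blast
  moreover have "(\<integral>x. L x \<partial>\<mu>) = c" unfolding L_def c_def using intg by (simp add: integral_sum)
  ultimately have "integrable \<mu> (\<lambda>x. c - L x)" "(\<integral>x. c - L x \<partial>\<mu>) = 0" by (simp_all add: prob_space)
  moreover have "AE x in \<mu>. 0 \<le> c - L x" using S by eventually_elim (use le in \<open>auto simp: L_def c_def\<close>)
  ultimately have "AE x in \<mu>. c - L x = 0" using integral_nonneg_eq_0_iff_AE by blast
  with S show ?thesis by eventually_elim (simp add: L_def c_def)
qed

lemma in_moment_hull_face:
  assumes I: "finite I" "j \<in> I" "a j \<noteq> 0"
    and face: "in_moment_hull {x\<in>S. (\<Sum>i\<in>I. a i * g i x) = (\<Sum>i\<in>I. a i * v i)} g (I - {j}) v"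
  shows "in_moment_hull S g I v"
proof -
  obtain X \<alpha> where X: "finite X" "X \<subseteq> {x\<in>S. (\<Sum>i\<in>I. a i * g i x) = (\<Sum>i\<in>I. a i * v i)}"
    "\<forall>x\<in>X. 0 \<le> \<alpha> x" "sum \<alpha> X = 1" "\<forall>i\<in>I - {j}. (\<Sum>x\<in>X. \<alpha> x * g i x) = v i"
    using face unfolding in_moment_hull_def by blast
  define c where "c = (\<Sum>i\<in>I. a i * v i)"
  have on_face: "a j * g j x = c - (\<Sum>i\<in>I - {j}. a i * g i x)" if "x \<in> X" for x
    using X(2) that I(1,2) by (auto simp: c_def sum.remove)
  have "a j * (\<Sum>x\<in>X. \<alpha> x * g j x) = (\<Sum>x\<in>X. \<alpha> x * (a j * g j x))"
    by (simp add: sum_distrib_left mult.left_commute)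
  also have "\<dots> = (\<Sum>x\<in>X. c * \<alpha> x - (\<Sum>i\<in>I - {j}. a i * (\<alpha> x * g i x)))"
    using on_face by (intro sum.cong) (simp_all add: right_diff_distrib sum_distrib_left mult.left_commute)
  also have "\<dots> = c * sum \<alpha> X - (\<Sum>x\<in>X. \<Sum>i\<in>I - {j}. a i * (\<alpha> x * g i x))"
    by (simp add: sum_subtractf sum_distrib_left)
  also have "(\<Sum>x\<in>X. \<Sum>i\<in>I - {j}. a i * (\<alpha> x * g i x)) = (\<Sum>i\<in>I - {j}. a i * (\<Sum>x\<in>X. \<alpha> x * g i x))"
    by (subst sum.swap) (simp add: sum_distrib_left)
  also have "c * sum \<alpha> X = c" using X(4) by simp
  also have "(\<Sum>i\<in>I - {j}. a i * (\<Sum>x\<in>X. \<alpha> x * g i x)) = (\<Sum>i\<in>I - {j}. a i * v i)"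
    using X(5) by simp
  also have "c - (\<Sum>i\<in>I - {j}. a i * v i) = a j * v j"
    using I(1,2) by (simp add: c_def sum.remove)
  finally have "(\<Sum>x\<in>X. \<alpha> x * g j x) = v j" using I(3) by simp
  with X show ?thesis unfolding in_moment_hull_def by blast
qed

text \<open>If the moment vector lay outside the moment hull, every line through it would still meet the
  hull by the induction hypothesis, so the cone spanned by the hull minus the moment vector would be
  total and proper, hence contained in a half-space. The measure is then concentrated on the
  supporting face, where the induction hypothesis applies with one test function fewer.\<close>

theorem integral_in_moment_hull:
  fixes \<mu> :: "'a measure" and g :: "'c \<Rightarrow> 'a \<Rightarrow> real"
  assumes P: "prob_space \<mu>" and "finite I" and "\<forall>i\<in>I. integrable \<mu> (g i)" and "AE x in \<mu>. x \<in> S"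
  shows "in_moment_hull S g I (\<lambda>i. \<integral>x. g i x \<partial>\<mu>)"
  using assms(2-4)
proof (induction "card I" arbitrary: I S g rule: less_induct)
  case (less I S g)
  note I = less.prems(1) and intg = less.prems(2) and S = less.prems(3)
  interpret prob_space \<mu> by (rule P)
  have "S \<noteq> {}"
  proof
    assume "S = {}"
    then have "AE x in \<mu>. False" using S by simp
    then show False by simp
  qed
  then obtain x0 where "x0 \<in> S" by blast
  show ?case
  proof (rule ccontr)
    assume nh: "\<not> in_moment_hull S g I (\<lambda>i. \<integral>x. g i x \<partial>\<mu>)"
    have "I \<noteq> {}"
    proof
      assume "I = {}"
      then have "in_moment_hull S g I (\<lambda>i. \<integral>x. g i x \<partial>\<mu>)"
        by (intro in_moment_hull_cong[OF in_moment_hull_point[OF \<open>x0 \<in> S\<close>]]) simp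
      with nh show False ..
    qed
    then obtain j where j: "j \<in> I" by blast
    have line: "\<exists>c t. in_moment_hull S g I c \<and> t \<noteq> 0 \<and> (\<forall>i\<in>I. c i - (\<integral>x. g i x \<partial>\<mu>) = t * w i)"
      if "supported_on I w" and nonzero: "\<exists>i\<in>I. w i \<noteq> 0" for w
    proof -
      obtain k where k: "k \<in> I" "w k \<noteq> 0" using nonzero by blast
      have "card (I - {k}) < card I" using k(1) I by (rule card_Diff1_less[rotated])
      then have "in_moment_hull S (\<lambda>i x. g i x - (w i / w k) * g k x) (I - {k})
          (\<lambda>i. \<integral>x. g i x - (w i / w k) * g k x \<partial>\<mu>)"
        by (rule less.hyps) (use I intg S k(1) in auto)
      from moment_hull_meets_line[OF intg k nh this] show ?thesis .
    qed
    obtain a where a: "\<exists>i\<in>I. a i \<noteq> 0"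
      "\<forall>z\<in>moment_cone S g I (\<lambda>i. \<integral>x. g i x \<partial>\<mu>). (\<Sum>i\<in>I. a i * z i) \<le> 0"
      using total_cone_halfspace[OF I total_cone_moment_cone[OF \<open>S \<noteq> {}\<close> line]
          moment_cone_proper[OF nh j]] by blast
    then obtain j0 where j0: "j0 \<in> I" "a j0 \<noteq> 0" by blast
    have "\<forall>x\<in>S. (\<Sum>i\<in>I. a i * g i x) \<le> (\<Sum>i\<in>I. a i * (\<integral>y. g i y \<partial>\<mu>))"
      using moment_cone_halfspace_le[OF a(2)] by blast
    from AE_supporting_face[OF P intg S this]
    have face: "AE x in \<mu>. x \<in> {x\<in>S. (\<Sum>i\<in>I. a i * g i x) = (\<Sum>i\<in>I. a i * (\<integral>y. g i y \<partial>\<mu>))}"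
      by simp
    have "card (I - {j0}) < card I" using j0(1) I by (rule card_Diff1_less[rotated])
    then have "in_moment_hull {x\<in>S. (\<Sum>i\<in>I. a i * g i x) = (\<Sum>i\<in>I. a i * (\<integral>y. g i y \<partial>\<mu>))} g (I - {j0})
        (\<lambda>i. \<integral>x. g i x \<partial>\<mu>)"
      by (rule less.hyps) (use I intg face in auto)
    then have "in_moment_hull S g I (\<lambda>i. \<integral>x. g i x \<partial>\<mu>)"
      by (rule in_moment_hull_face[of I j0 a, OF I j0])
    with nh show False ..
  qed
qed

corollary finite_moment_representation:
  fixes \<mu> :: "'a measure" and g :: "'c \<Rightarrow> 'a \<Rightarrow> real"
  assumes "prob_space \<mu>" and "finite I" and "\<forall>i\<in>I. integrable \<mu> (g i)" and "AE x in \<mu>. x \<in> S"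
  obtains Y \<alpha> where "finite Y" "Y \<subseteq> S" "card Y \<le> card I + 1" "\<forall>x\<in>Y. 0 \<le> \<alpha> x" "sum \<alpha> Y = 1"
    "\<forall>i\<in>I. (\<Sum>x\<in>Y. \<alpha> x * g i x) = (\<integral>x. g i x \<partial>\<mu>)"
proof -
  obtain X \<alpha> where X: "finite X" "X \<subseteq> S" "\<forall>x\<in>X. 0 \<le> \<alpha> x" "sum \<alpha> X = 1"
    "\<forall>i\<in>I. (\<Sum>x\<in>X. \<alpha> x * g i x) = (\<integral>x. g i x \<partial>\<mu>)"
    using integral_in_moment_hull[OF assms] unfolding in_moment_hull_def by blast
  obtain Y \<alpha>' where "Y \<subseteq> X" "card Y \<le> card I + 1" "\<forall>x\<in>Y. 0 \<le> \<alpha>' x" "sum \<alpha>' Y = sum \<alpha> X"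
    "\<forall>i\<in>I. (\<Sum>x\<in>Y. \<alpha>' x * g i x) = (\<Sum>x\<in>X. \<alpha> x * g i x)"
    using caratheodory_weights[OF assms(2) X(1,3)] by blast
  with X show thesis using finite_subset by (intro that[of Y \<alpha>']) auto
qed

section \<open>Growth bounds on the orthant\<close>

definition orthant_growth :: "(real ^ 'n \<Rightarrow> real) \<Rightarrow> nat \<Rightarrow> bool" where
  "orthant_growth h D \<longleftrightarrow> (\<exists>C\<ge>0. \<forall>x\<in>nonneg_orthant. \<bar>h x\<bar> \<le> C * (1 + norm x ^ D))"

lemma power_le_one_plus_power:
  fixes r :: real
  assumes "k \<le> D" "0 \<le> r"
  shows "r ^ k \<le> 1 + r ^ D"
proof (cases "r \<le> 1")
  case True
  then have "r ^ k \<le> 1" using assms by (simp add: power_le_one)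
  moreover have "0 \<le> r ^ D" using assms by simp
  ultimately show ?thesis by simp
next
  case False
  then have "r ^ k \<le> r ^ D" using assms by (intro power_increasing) auto
  then show ?thesis by simp
qed

lemma is_poly_deg_growth:
  fixes f :: "real ^ 'n \<Rightarrow> real"
  assumes "is_poly_deg D f"
  shows "\<exists>C\<ge>0. \<forall>x. \<bar>f x\<bar> \<le> C * (1 + norm x ^ D)"
proof -
  define A where "A = {\<alpha>::'n \<Rightarrow> nat. sum \<alpha> UNIV \<le> D}"
  obtain c where f: "f = (\<lambda>x. \<Sum>\<alpha>\<in>A. c \<alpha> * (\<Prod>i\<in>UNIV. (x $ i) ^ \<alpha> i))"
    using assms unfolding is_poly_deg_def A_def by blast
  have monomial: "\<bar>\<Prod>i\<in>UNIV. (x $ i) ^ \<alpha> i\<bar> \<le> 1 + norm x ^ D" if "\<alpha> \<in> A" for \<alpha> and x :: "real ^ 'n"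
  proof -
    have "\<bar>\<Prod>i\<in>UNIV. (x $ i) ^ \<alpha> i\<bar> = (\<Prod>i\<in>UNIV. \<bar>x $ i\<bar> ^ \<alpha> i)"
      by (simp add: abs_prod power_abs)
    also have "\<dots> \<le> (\<Prod>i\<in>UNIV. norm x ^ \<alpha> i)"
      by (intro prod_mono conjI power_mono component_le_norm_cart) auto
    also have "\<dots> = norm x ^ (\<Sum>i\<in>UNIV. \<alpha> i)" by (simp add: power_sum)
    also have "\<dots> \<le> 1 + norm x ^ D" using that by (intro power_le_one_plus_power) (auto simp: A_def)
    finally show ?thesis .
  qed
  have "\<bar>f x\<bar> \<le> (\<Sum>\<alpha>\<in>A. \<bar>c \<alpha>\<bar>) * (1 + norm x ^ D)" for x
  proof -
    have "\<bar>f x\<bar> \<le> (\<Sum>\<alpha>\<in>A. \<bar>c \<alpha> * (\<Prod>i\<in>UNIV. (x $ i) ^ \<alpha> i)\<bar>)"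
      unfolding f by (rule sum_abs)
    also have "\<dots> \<le> (\<Sum>\<alpha>\<in>A. \<bar>c \<alpha>\<bar> * (1 + norm x ^ D))"
      by (intro sum_mono) (auto simp: abs_mult intro!: mult_left_mono monomial)
    finally show ?thesis by (simp add: sum_distrib_right)
  qed
  then show ?thesis by (intro exI[of _ "\<Sum>\<alpha>\<in>A. \<bar>c \<alpha>\<bar>"]) (auto intro: sum_nonneg)
qed

lemma continuous_on_is_poly_deg:
  fixes f :: "real ^ 'n \<Rightarrow> real"
  assumes "is_poly_deg D f"
  shows "continuous_on S f"
proof -
  obtain c where f: "f = (\<lambda>x. \<Sum>\<alpha>\<in>{\<alpha>::'n\<Rightarrow>nat. sum \<alpha> UNIV \<le> D}. c \<alpha> * (\<Prod>i\<in>UNIV. (x $ i) ^ \<alpha> i))"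
    using assms unfolding is_poly_deg_def by blast
  show ?thesis unfolding f by (intro continuous_intros continuous_on_component continuous_on_id)
qed

lemma orthant_growth_is_poly_deg: "is_poly_deg D f \<Longrightarrow> orthant_growth f D"
  using is_poly_deg_growth unfolding orthant_growth_def by blast

lemma orthant_growth_is_pw_poly_deg:
  fixes \<phi> :: "real ^ 'n \<Rightarrow> real"
  assumes "is_pw_poly_deg nonneg_orthant D \<phi>"
  shows "orthant_growth \<phi> D"
proof -
  obtain P :: "((real ^ 'n) set \<times> (real ^ 'n \<Rightarrow> real)) set" where P: "finite P"
    "nonneg_orthant \<subseteq> (\<Union>(A, g)\<in>P. A)"
    "\<forall>(A, g)\<in>P. is_poly_deg D g \<and> (\<forall>x\<in>A \<inter> nonneg_orthant. \<phi> x = g x)"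
    using assms unfolding is_pw_poly_deg_def by blast
  have "\<forall>p\<in>P. \<exists>C\<ge>0. \<forall>x. \<bar>snd p x\<bar> \<le> C * (1 + norm x ^ D)"
    using P(3) is_poly_deg_growth by fastforce
  then obtain C where C: "\<forall>p\<in>P. C p \<ge> 0 \<and> (\<forall>x. \<bar>snd p x\<bar> \<le> C p * (1 + norm x ^ D))"
    by metis
  have "\<bar>\<phi> x\<bar> \<le> (\<Sum>p\<in>P. C p) * (1 + norm x ^ D)" if x: "x \<in> nonneg_orthant" for x
  proof -
    obtain A g where Ag: "(A, g) \<in> P" "x \<in> A" using P(2) x by blast
    then have "\<bar>\<phi> x\<bar> \<le> C (A, g) * (1 + norm x ^ D)" using P(3) C x by fastforce
    also have "\<dots> \<le> (\<Sum>p\<in>P. C p) * (1 + norm x ^ D)"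
      using Ag(1) P(1) C by (intro mult_right_mono member_le_sum) auto
    finally show ?thesis .
  qed
  then show ?thesis unfolding orthant_growth_def using C by (intro exI[of _ "\<Sum>p\<in>P. C p"]) (auto intro: sum_nonneg)
qed

lemma orthant_growth_call: "orthant_growth (\<lambda>x::real ^ 'n. max 0 (x $ i - k)) 1"
proof -
  have "\<bar>max 0 (x $ i - k)\<bar> \<le> (1 + \<bar>k\<bar>) * (1 + norm x ^ 1)" for x :: "real ^ 'n"
  proof -
    have "\<bar>max 0 (x $ i - k)\<bar> \<le> norm x + \<bar>k\<bar>" using component_le_norm_cart[of x i] by auto
    also have "\<dots> \<le> (1 + \<bar>k\<bar>) * (1 + norm x ^ 1)" by (simp add: algebra_simps)
    finally show ?thesis .
  qed
  then show ?thesis unfolding orthant_growth_def by (intro exI[of _ "1 + \<bar>k\<bar>"]) auto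
qed

lemma orthant_growth_const: "orthant_growth (\<lambda>x. c) 0"
  unfolding orthant_growth_def by (intro exI[of _ "\<bar>c\<bar>"]) auto

lemma orthant_growth_uminus: "orthant_growth h D \<Longrightarrow> orthant_growth (\<lambda>x. - h x) D"
  unfolding orthant_growth_def by simp

lemma closed_nonneg_orthant: "closed (nonneg_orthant :: (real ^ 'n) set)"
  unfolding nonneg_orthant_def
  by (intro closed_Collect_all closed_Collect_le continuous_intros continuous_on_component continuous_on_id)

lemma zero_in_nonneg_orthant: "0 \<in> nonneg_orthant"
  by (simp add: nonneg_orthant_def)

section \<open>Limits of atomic configurations\<close>

lemma finite_diagonal_subseq:
  fixes P :: "(nat \<Rightarrow> nat) \<Rightarrow> nat \<Rightarrow> bool"
  assumes subseq: "\<And>r (q :: nat \<Rightarrow> nat) j. P r j \<Longrightarrow> strict_mono q \<Longrightarrow> P (r \<circ> q) j"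
    and refine: "\<And>(r :: nat \<Rightarrow> nat) j. strict_mono r \<Longrightarrow> \<exists>q :: nat \<Rightarrow> nat. strict_mono q \<and> P (r \<circ> q) j"
  shows "\<exists>r. strict_mono r \<and> (\<forall>j<K. P r j)"
proof (induction K)
  case 0
  show ?case by (intro exI[of _ id]) (auto simp: strict_mono_def)
next
  case (Suc K)
  then obtain r where r: "strict_mono r" "\<forall>j<K. P r j" by blast
  obtain q where q: "strict_mono q" "P (r \<circ> q) K" using refine r(1) by blast
  have "\<forall>j<Suc K. P (r \<circ> q) j" using r(2) q subseq by (auto simp: less_Suc_eq)
  with strict_mono_o[OF r(1) q(1)] show ?case by blast
qed

lemma bounded_or_escaping_subseq:
  fixes a :: "nat \<Rightarrow> real" and z :: "nat \<Rightarrow> real ^ 'n"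
  assumes a: "\<forall>s. 0 \<le> a s \<and> a s \<le> 1"
  obtains q where "strict_mono q" "convergent (\<lambda>s. a (q s))"
    "convergent (\<lambda>s. z (q s)) \<or> filterlim (\<lambda>s. norm (z (q s))) at_top sequentially"
proof (cases "\<exists>B. infinite {s. norm (z s) \<le> B}")
  case True
  then obtain B where "infinite {s. norm (z s) \<le> B}" by blast
  then obtain q1 :: "nat \<Rightarrow> nat" where q1: "strict_mono q1" "\<forall>n. q1 n \<in> {s. norm (z s) \<le> B}"
    using infinite_enumerate by blast
  have bounded: "\<forall>n. (a (q1 n), z (q1 n)) \<in> {0..1} \<times> cball 0 B" using q1 a by auto
  have "compact ({0..1::real} \<times> cball (0::real ^ 'n) B)" by (intro compact_Times) auto
  from seq_compactE[OF compact_imp_seq_compact[OF this] bounded]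
  obtain l r where lr: "strict_mono r" "((\<lambda>n. (a (q1 n), z (q1 n))) \<circ> r) \<longlonglongrightarrow> l" .
  have "(\<lambda>s. a ((q1 \<circ> r) s)) \<longlonglongrightarrow> fst l" "(\<lambda>s. z ((q1 \<circ> r) s)) \<longlonglongrightarrow> snd l"
    using tendsto_fst[OF lr(2)] tendsto_snd[OF lr(2)] by (simp_all add: o_def)
  then show ?thesis by (intro that[OF strict_mono_o[OF q1(1) lr(1)]] disjI1 convergentI)
next
  case False
  have "filterlim (\<lambda>s. norm (z s)) at_top sequentially"
  proof (subst filterlim_at_top, intro allI)
    fix B
    have "eventually (\<lambda>s. \<not> norm (z s) \<le> B) cofinite"
      unfolding eventually_cofinite using False by simp
    then show "eventually (\<lambda>s. B \<le> norm (z s)) sequentially"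
      unfolding cofinite_eq_sequentially by (rule eventually_mono) auto
  qed
  moreover have "\<forall>n. a n \<in> {0..1}" using a by simp
  then obtain l r where lr: "strict_mono r" "(a \<circ> r) \<longlonglongrightarrow> l"
    using seq_compactE[OF compact_imp_seq_compact[OF compact_Icc]] by blast
  ultimately show ?thesis
    using that[of r] filterlim_compose[OF _ filterlim_subseq[OF lr(1)]] lr
    by (auto simp: convergent_def o_def)
qed

lemma escaping_atom_tendsto_zero:
  fixes x :: "nat \<Rightarrow> real ^ 'n"
  assumes esc: "filterlim (\<lambda>s. norm (x s)) at_top sequentially"
    and w: "\<forall>s. 0 \<le> w s" and mom: "\<forall>s. w s * norm (x s) ^ d \<le> M"
    and orth: "\<forall>s. x s \<in> nonneg_orthant" and h: "orthant_growth h D" "D < d"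
  shows "(\<lambda>s. w s * h (x s)) \<longlonglongrightarrow> 0"
proof -
  obtain C where C: "0 \<le> C" "\<forall>y\<in>nonneg_orthant. \<bar>h y\<bar> \<le> C * (1 + norm y ^ D)"
    using h(1) unfolding orthant_growth_def by blast
  show ?thesis
  proof (rule Lim_null_comparison)
    have "eventually (\<lambda>s. 1 \<le> norm (x s)) sequentially"
      using esc by (simp add: filterlim_at_top)
    then show "eventually (\<lambda>s. norm (w s * h (x s)) \<le> 2 * C * M / norm (x s) ^ (d - D)) sequentially"
    proof (rule eventually_mono)
      fix s assume "1 \<le> norm (x s)"
      define n where "n = norm (x s)"
      have n: "1 \<le> n" using \<open>1 \<le> norm (x s)\<close> by (simp add: n_def)
      then have n_pos: "0 < n ^ (d - D)" by (intro zero_less_power) linarith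
      \<comment> \<open>Both w and w n^D are at most M / n^(d - D), because n^d dominates.\<close>
      have "w s * n ^ D * n ^ (d - D) \<le> M"
        using mom h(2) by (simp add: n_def mult.assoc flip: power_add)
      moreover have "w s * n ^ (d - D) \<le> M"
        using mom w n order_trans[OF mult_left_mono[OF power_increasing[of "d - D" d n]]]
        by (simp add: n_def)
      ultimately have "(w s + w s * n ^ D) * n ^ (d - D) \<le> 2 * M" by (simp add: algebra_simps)
      then have bound: "w s + w s * n ^ D \<le> 2 * M / n ^ (d - D)" using n_pos by (simp add: field_simps)
      have "\<bar>h (x s)\<bar> \<le> C * (1 + n ^ D)" using C(2) orth by (simp add: n_def)
      then have "norm (w s * h (x s)) \<le> w s * (C * (1 + n ^ D))"
        using w by (simp add: abs_mult mult_left_mono)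
      also have "\<dots> = C * (w s + w s * n ^ D)" by (simp add: algebra_simps)
      also have "\<dots> \<le> C * (2 * M / n ^ (d - D))" using bound C(1) by (rule mult_left_mono)
      finally show "norm (w s * h (x s)) \<le> 2 * C * M / norm (x s) ^ (d - D)" by (simp add: n_def mult.assoc mult.left_commute)
    qed
    have "filterlim (\<lambda>s. norm (x s) ^ (d - D)) at_infinity sequentially"
      using h(2) by (intro filterlim_at_top_imp_at_infinity filterlim_pow_at_top[OF _ esc]) simp
    then show "(\<lambda>s. 2 * C * M / norm (x s) ^ (d - D)) \<longlonglongrightarrow> 0"
      by (intro tendsto_divide_0[OF tendsto_const])
  qed
qed

definition atom_limit :: "(nat \<Rightarrow> real) \<Rightarrow> (nat \<Rightarrow> real ^ 'n) \<Rightarrow> real \<Rightarrow> real ^ 'n \<Rightarrow> bool" where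
  "atom_limit w x w0 x0 \<longleftrightarrow>
     w \<longlonglongrightarrow> w0 \<and> (x \<longlonglongrightarrow> x0 \<or> filterlim (\<lambda>s. norm (x s)) at_top sequentially \<and> w0 = 0)"

lemma atom_limit_subseq:
  assumes "atom_limit w x w0 x0" "strict_mono q"
  shows "atom_limit (w \<circ> q) (x \<circ> q) w0 x0"
proof -
  have w: "w \<longlonglongrightarrow> w0" and x: "x \<longlonglongrightarrow> x0 \<or> filterlim (\<lambda>s. norm (x s)) at_top sequentially \<and> w0 = 0"
    using assms(1) unfolding atom_limit_def by blast+
  from x have "(x \<circ> q) \<longlonglongrightarrow> x0 \<or> filterlim (\<lambda>s. norm ((x \<circ> q) s)) at_top sequentially \<and> w0 = 0"
  proof
    assume "x \<longlonglongrightarrow> x0"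
    then show ?thesis using LIMSEQ_subseq_LIMSEQ[OF _ assms(2)] by blast
  next
    assume "filterlim (\<lambda>s. norm (x s)) at_top sequentially \<and> w0 = 0"
    then show ?thesis
      using filterlim_compose[OF _ filterlim_subseq[OF assms(2)], of "\<lambda>s. norm (x s)"] by (simp add: o_def)
  qed
  with LIMSEQ_subseq_LIMSEQ[OF w assms(2)] show ?thesis unfolding atom_limit_def by blast
qed

lemma atom_limit_exists:
  fixes x :: "nat \<Rightarrow> real ^ 'n"
  assumes w: "\<forall>s. 0 \<le> w s \<and> w s \<le> 1" and orth: "\<forall>s. x s \<in> nonneg_orthant"
    and mom: "\<forall>s. w s * norm (x s) ^ d \<le> M" and "0 < d"
  obtains q w0 x0 where "strict_mono q" "0 \<le> w0" "x0 \<in> nonneg_orthant" "atom_limit (w \<circ> q) (x \<circ> q) w0 x0"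
proof -
  obtain q where q: "strict_mono q" "convergent (\<lambda>s. w (q s))"
    "convergent (\<lambda>s. x (q s)) \<or> filterlim (\<lambda>s. norm (x (q s))) at_top sequentially"
    using bounded_or_escaping_subseq[OF w] by blast
  then obtain w0 where w0: "(w \<circ> q) \<longlonglongrightarrow> w0" by (auto simp: convergent_def o_def)
  have "0 \<le> w0" using w by (intro LIMSEQ_le_const[OF w0]) auto
  show thesis
  proof (cases "convergent (\<lambda>s. x (q s))")
    case True
    then obtain x0 where x0: "(x \<circ> q) \<longlonglongrightarrow> x0" by (auto simp: convergent_def o_def)
    have "x0 \<in> nonneg_orthant"
      using orth by (intro Lim_in_closed_set[OF closed_nonneg_orthant _ _ x0]) auto
    with x0 w0 show thesis by (intro that[OF q(1) \<open>0 \<le> w0\<close>]) (auto simp: atom_limit_def)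
  next
    case False
    then have esc: "filterlim (\<lambda>s. norm ((x \<circ> q) s)) at_top sequentially" using q(3) by simp
    have "(\<lambda>s. (w \<circ> q) s * 1) \<longlonglongrightarrow> 0"
      by (rule escaping_atom_tendsto_zero[OF esc, where M = M and d = d and D = 0])
        (use w mom orth orthant_growth_const \<open>0 < d\<close> in auto)
    then have "w0 = 0" using LIMSEQ_unique[OF w0] by (simp add: o_def)
    with w0 esc show thesis
      by (intro that[OF q(1) \<open>0 \<le> w0\<close> zero_in_nonneg_orthant]) (auto simp: atom_limit_def)
  qed
qed

lemma atom_limit_tendsto:
  fixes x :: "nat \<Rightarrow> real ^ 'n"
  assumes lim: "atom_limit w x w0 x0" and "x0 \<in> nonneg_orthant"
    and orth: "\<forall>s. x s \<in> nonneg_orthant" and w: "\<forall>s. 0 \<le> w s" and mom: "\<forall>s. w s * norm (x s) ^ d \<le> M"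
    and h: "continuous_on nonneg_orthant h" "orthant_growth h D" "D < d"
  shows "(\<lambda>s. w s * h (x s)) \<longlonglongrightarrow> w0 * h x0"
proof -
  have w0: "w \<longlonglongrightarrow> w0" using lim by (simp add: atom_limit_def)
  consider "x \<longlonglongrightarrow> x0" | "filterlim (\<lambda>s. norm (x s)) at_top sequentially" "w0 = 0"
    using lim unfolding atom_limit_def by blast
  then show ?thesis
  proof cases
    case 1
    have "(\<lambda>s. h (x s)) \<longlonglongrightarrow> h x0"
      using orth \<open>x0 \<in> nonneg_orthant\<close> by (intro continuous_on_tendsto_compose[OF h(1) 1]) auto
    with w0 show ?thesis by (rule tendsto_mult)
  next
    case 2
    then show ?thesis using escaping_atom_tendsto_zero[OF 2(1) w mom orth h(2,3)] by simp
  qed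
qed

lemma config_subseq_limit:
  fixes W :: "nat \<Rightarrow> nat \<Rightarrow> real" and X :: "nat \<Rightarrow> nat \<Rightarrow> real ^ 'n"
  assumes W: "\<forall>s. \<forall>j<K. 0 \<le> W s j" and W1: "\<forall>s. (\<Sum>j<K. W s j) = 1"
    and X: "\<forall>s. \<forall>j<K. X s j \<in> nonneg_orthant"
    and mom: "\<forall>s. (\<Sum>j<K. W s j * norm (X s j) ^ d) \<le> M" and "0 < d"
  obtains r w x where "strict_mono r" "\<forall>j<K. 0 \<le> w j \<and> x j \<in> nonneg_orthant \<and>
    atom_limit (\<lambda>s. W (r s) j) (\<lambda>s. X (r s) j) (w j) (x j)"
proof -
  have bounds: "W s j \<le> 1" "W s j * norm (X s j) ^ d \<le> M" if "j < K" for s j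
  proof -
    show "W s j \<le> 1" using member_le_sum[of j "{..<K}" "W s"] W W1 that by simp
    show "W s j * norm (X s j) ^ d \<le> M"
      using member_le_sum[of j "{..<K}" "\<lambda>j. W s j * norm (X s j) ^ d"] W mom that
      by (simp add: order_trans[OF _ mom[rule_format]])
  qed
  define P where "P r j \<longleftrightarrow> (j < K \<longrightarrow> (\<exists>w0 x0. 0 \<le> w0 \<and> x0 \<in> nonneg_orthant \<and>
    atom_limit (\<lambda>s. W (r s) j) (\<lambda>s. X (r s) j) w0 x0))" for r :: "nat \<Rightarrow> nat" and j
  have "\<exists>r. strict_mono r \<and> (\<forall>j<K. P r j)"
  proof (rule finite_diagonal_subseq)
    show "P (r \<circ> q) j" if "P r j" "strict_mono q" for r q :: "nat \<Rightarrow> nat" and j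
      using that atom_limit_subseq[of "\<lambda>s. W (r s) j" "\<lambda>s. X (r s) j" _ _ q]
      unfolding P_def by (auto simp: o_def)
    show "\<exists>q. strict_mono q \<and> P (r \<circ> q) j" if "strict_mono r" for r :: "nat \<Rightarrow> nat" and j
    proof (cases "j < K")
      case True
      obtain q w0 x0 where "strict_mono q" "0 \<le> w0" "x0 \<in> nonneg_orthant"
        "atom_limit ((\<lambda>s. W (r s) j) \<circ> q) ((\<lambda>s. X (r s) j) \<circ> q) w0 x0"
        by (rule atom_limit_exists[of "\<lambda>s. W (r s) j" "\<lambda>s. X (r s) j" d M])
          (use W X bounds[OF True] True \<open>0 < d\<close> in auto)
      then show ?thesis unfolding P_def by (auto simp: o_def)
    qed (auto simp: P_def intro: strict_mono_id)
  qed
  then obtain r where r: "strict_mono r" "\<forall>j<K. P r j" by blast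
  then have "\<forall>j\<in>{..<K}. \<exists>p. 0 \<le> fst p \<and> snd p \<in> nonneg_orthant \<and>
      atom_limit (\<lambda>s. W (r s) j) (\<lambda>s. X (r s) j) (fst p) (snd p)"
    unfolding P_def by force
  then obtain p where "\<forall>j\<in>{..<K}. 0 \<le> fst (p j) \<and> snd (p j) \<in> nonneg_orthant \<and>
      atom_limit (\<lambda>s. W (r s) j) (\<lambda>s. X (r s) j) (fst (p j)) (snd (p j))"
    by (metis bchoice)
  with r(1) show thesis by (intro that[of r "\<lambda>j. fst (p j)" "\<lambda>j. snd (p j)"]) auto
qed

lemma config_limit_tendsto:
  fixes W :: "nat \<Rightarrow> nat \<Rightarrow> real" and X :: "nat \<Rightarrow> nat \<Rightarrow> real ^ 'n"
  assumes lim: "\<forall>j<K. x j \<in> nonneg_orthant \<and> atom_limit (\<lambda>s. W s j) (\<lambda>s. X s j) (w j) (x j)"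
    and W: "\<forall>s. \<forall>j<K. 0 \<le> W s j" and X: "\<forall>s. \<forall>j<K. X s j \<in> nonneg_orthant"
    and mom: "\<forall>s. (\<Sum>j<K. W s j * norm (X s j) ^ d) \<le> M"
    and h: "continuous_on nonneg_orthant h" "orthant_growth h D" "D < d"
  shows "(\<lambda>s. \<Sum>j<K. W s j * h (X s j)) \<longlonglongrightarrow> (\<Sum>j<K. w j * h (x j))"
proof (intro tendsto_sum)
  fix j assume "j \<in> {..<K}"
  have "W s j * norm (X s j) ^ d \<le> M" for s
    using member_le_sum[of j "{..<K}" "\<lambda>j. W s j * norm (X s j) ^ d"] W \<open>j \<in> {..<K}\<close>
    by (simp add: order_trans[OF _ mom[rule_format]])
  then show "(\<lambda>s. W s j * h (X s j)) \<longlonglongrightarrow> w j * h (x j)"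
    using lim \<open>j \<in> {..<K}\<close> W X by (intro atom_limit_tendsto[OF _ _ _ _ _ h]) auto
qed

lemma config_limit_moment_le:
  fixes W :: "nat \<Rightarrow> nat \<Rightarrow> real" and X :: "nat \<Rightarrow> nat \<Rightarrow> real ^ 'n"
  assumes lim: "\<forall>j<K. atom_limit (\<lambda>s. W s j) (\<lambda>s. X s j) (w j) (x j)"
    and W: "\<forall>s. \<forall>j<K. 0 \<le> W s j" and mom: "\<forall>s. (\<Sum>j<K. W s j * norm (X s j) ^ d) \<le> M"
  shows "(\<Sum>j<K. w j * norm (x j) ^ d) \<le> M"
proof -
  \<comment> \<open>Only atoms with nonzero limit weight converge; the escaping ones contribute 0 in the limit.\<close>
  define m where "m s = (\<Sum>j<K. if w j = 0 then 0 else W s j * norm (X s j) ^ d)" for s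
  have m_lim: "m \<longlonglongrightarrow> (\<Sum>j<K. if w j = 0 then 0 else w j * norm (x j) ^ d)"
    unfolding m_def
  proof (intro tendsto_sum)
    fix j assume "j \<in> {..<K}"
    then have "(\<lambda>s. W s j) \<longlonglongrightarrow> w j" "w j \<noteq> 0 \<Longrightarrow> (\<lambda>s. X s j) \<longlonglongrightarrow> x j"
      using lim unfolding atom_limit_def by auto
    then show "(\<lambda>s. if w j = 0 then 0 else W s j * norm (X s j) ^ d)
        \<longlonglongrightarrow> (if w j = 0 then 0 else w j * norm (x j) ^ d)"
      by (cases "w j = 0") (auto intro!: tendsto_mult tendsto_power tendsto_norm)
  qed
  have m_le: "m s \<le> M" for s
    unfolding m_def using W by (intro order_trans[OF sum_mono mom[rule_format]]) auto
  have "(\<Sum>j<K. if w j = 0 then 0 else w j * norm (x j) ^ d) \<le> M"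
    using LIMSEQ_le_const2[OF m_lim] m_le by blast
  moreover have "(\<Sum>j<K. if w j = 0 then 0 else w j * norm (x j) ^ d) = (\<Sum>j<K. w j * norm (x j) ^ d)"
    by (intro sum.cong) auto
  ultimately show ?thesis by simp
qed

section \<open>Feasible configurations of finitely many atoms\<close>

text \<open>K atoms x j with weights w j satisfying the constraints of the problem; only the
  indices j < K matter.\<close>

definition feasible_config ::
  "nat \<Rightarrow> ('n \<Rightarrow> nat) \<Rightarrow> ('n \<Rightarrow> nat \<Rightarrow> real) \<Rightarrow> ('n \<Rightarrow> nat \<Rightarrow> real) \<Rightarrow> nat \<Rightarrow>
   (nat \<Rightarrow> real ^ 'n \<Rightarrow> real) \<Rightarrow> (nat \<Rightarrow> real) \<Rightarrow> real \<Rightarrow> nat \<Rightarrow> (nat \<Rightarrow> real) \<Rightarrow> (nat \<Rightarrow> real ^ 'n) \<Rightarrow> bool"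
  where
  "feasible_config K N k q m f p M d w x \<longleftrightarrow>
     (\<forall>j<K. 0 \<le> w j \<and> x j \<in> nonneg_orthant) \<and> (\<Sum>j<K. w j) = 1 \<and>
     (\<forall>i. \<forall>jj\<in>{1..N i}. (\<Sum>j<K. w j * max 0 (x j $ i - k i jj)) = q i jj) \<and>
     (\<forall>l\<in>{1..m}. (\<Sum>j<K. w j * f l (x j)) = p l) \<and> (\<Sum>j<K. w j * norm (x j) ^ d) \<le> M"

lemma feasible_config_objective_bounded:
  assumes "orthant_growth \<psi> D" "D \<le> d"
  shows "\<exists>B. \<forall>w x. feasible_config K N k q m f p M d w x \<longrightarrow> (\<Sum>j<K. w j * \<psi> (x j)) \<le> B"
proof -
  obtain C where C: "0 \<le> C" "\<forall>y\<in>nonneg_orthant. \<bar>\<psi> y\<bar> \<le> C * (1 + norm y ^ D)"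
    using assms(1) unfolding orthant_growth_def by blast
  have "(\<Sum>j<K. w j * \<psi> (x j)) \<le> C * (2 + M)" if "feasible_config K N k q m f p M d w x" for w x
  proof -
    note c = that[unfolded feasible_config_def]
    have "(\<Sum>j<K. w j * \<psi> (x j)) \<le> (\<Sum>j<K. w j * (C * (2 + norm (x j) ^ d)))"
    proof (intro sum_mono mult_left_mono)
      fix j assume "j \<in> {..<K}"
      then have "\<bar>\<psi> (x j)\<bar> \<le> C * (1 + norm (x j) ^ D)" using C(2) c by blast
      also have "\<dots> \<le> C * (2 + norm (x j) ^ d)"
        using power_le_one_plus_power[OF assms(2), of "norm (x j)"] C(1) by (intro mult_left_mono) auto
      finally show "\<psi> (x j) \<le> C * (2 + norm (x j) ^ d)" by linarith
      show "0 \<le> w j" using c \<open>j \<in> {..<K}\<close> by blast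
    qed
    also have "\<dots> = C * (2 * (\<Sum>j<K. w j) + (\<Sum>j<K. w j * norm (x j) ^ d))"
      by (simp add: sum_distrib_left algebra_simps sum.distrib)
    also have "\<dots> \<le> C * (2 + M)" using c C(1) by (intro mult_left_mono) auto
    finally show ?thesis .
  qed
  then show ?thesis by blast
qed

lemma feasible_config_limit:
  fixes W :: "nat \<Rightarrow> nat \<Rightarrow> real" and X :: "nat \<Rightarrow> nat \<Rightarrow> real ^ 'n"
  assumes feasible: "\<And>s. feasible_config K N k q m f p M d (W s) (X s)" and "1 < d"
    and f: "\<forall>l\<in>{1..m}. continuous_on nonneg_orthant (f l) \<and> (\<exists>D<d. orthant_growth (f l) D)"
  obtains r w x where "strict_mono r" "feasible_config K N k q m f p M d w x"
    "\<And>h D. continuous_on nonneg_orthant h \<Longrightarrow> orthant_growth h D \<Longrightarrow> D < d \<Longrightarrow>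
       (\<lambda>s. \<Sum>j<K. W (r s) j * h (X (r s) j)) \<longlonglongrightarrow> (\<Sum>j<K. w j * h (x j))"
proof -
  note c = feasible[unfolded feasible_config_def]
  have W: "\<forall>s. \<forall>j<K. 0 \<le> W s j" and W1: "\<forall>s. (\<Sum>j<K. W s j) = 1"
    and X: "\<forall>s. \<forall>j<K. X s j \<in> nonneg_orthant" and mom: "\<forall>s. (\<Sum>j<K. W s j * norm (X s j) ^ d) \<le> M"
    and call: "\<And>s i jj. jj \<in> {1..N i} \<Longrightarrow> (\<Sum>j<K. W s j * max 0 (X s j $ i - k i jj)) = q i jj"
    and moments: "\<And>s l. l \<in> {1..m} \<Longrightarrow> (\<Sum>j<K. W s j * f l (X s j)) = p l"
    using c by blast+
  have "0 < d" using \<open>1 < d\<close> by simp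
  with W W1 X mom obtain r w x where r: "strict_mono r" and wx: "\<forall>j<K. 0 \<le> w j \<and> x j \<in> nonneg_orthant \<and>
      atom_limit (\<lambda>s. W (r s) j) (\<lambda>s. X (r s) j) (w j) (x j)"
    by (rule config_subseq_limit)
  have lim: "(\<lambda>s. \<Sum>j<K. W (r s) j * h (X (r s) j)) \<longlonglongrightarrow> (\<Sum>j<K. w j * h (x j))"
    if "continuous_on nonneg_orthant h" "orthant_growth h D" "D < d" for h D
    using wx W X mom by (intro config_limit_tendsto[OF _ _ _ _ that]) auto
  have preserved: "(\<Sum>j<K. w j * h (x j)) = v"
    if "continuous_on nonneg_orthant h" "orthant_growth h D" "D < d" "\<And>s. (\<Sum>j<K. W s j * h (X s j)) = v"
    for h D v
    using LIMSEQ_unique[OF lim[OF that(1-3)]] that(4) by simp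
  have feasible_limit: "feasible_config K N k q m f p M d w x"
    unfolding feasible_config_def
  proof (intro conjI allI ballI impI)
    show "0 \<le> w j" "x j \<in> nonneg_orthant" if "j < K" for j using wx that by blast+
    have "(\<Sum>j<K. w j * 1) = 1"
      by (rule preserved[OF _ orthant_growth_const]) (use W1 \<open>1 < d\<close> in auto)
    then show "(\<Sum>j<K. w j) = 1" by simp
    show "(\<Sum>j<K. w j * max 0 (x j $ i - k i jj)) = q i jj" if "jj \<in> {1..N i}" for i jj
    proof (rule preserved[OF _ orthant_growth_call])
      show "continuous_on nonneg_orthant (\<lambda>y::real ^ 'n. max 0 (y $ i - k i jj))"
        by (intro continuous_intros continuous_on_component continuous_on_id)
    qed (use call[OF that] \<open>1 < d\<close> in auto)
    show "(\<Sum>j<K. w j * f l (x j)) = p l" if l: "l \<in> {1..m}" for l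
    proof -
      obtain D where "D < d" "orthant_growth (f l) D" using f l by blast
      then show ?thesis by (intro preserved[of "f l" D]) (use f moments l in auto)
    qed
    have "\<forall>j<K. atom_limit (\<lambda>s. W (r s) j) (\<lambda>s. X (r s) j) (w j) (x j)" using wx by blast
    then show "(\<Sum>j<K. w j * norm (x j) ^ d) \<le> M"
      by (rule config_limit_moment_le) (use W mom in auto)
  qed
  from that[OF r feasible_limit lim] show thesis .
qed

lemma feasible_config_max_exists:
  fixes \<psi> :: "real ^ 'n \<Rightarrow> real"
  assumes ex: "\<exists>w x. feasible_config K N k q m f p M d w x"
    and \<psi>: "continuous_on nonneg_orthant \<psi>" "orthant_growth \<psi> D" "D < d" and "1 < d"
    and f: "\<forall>l\<in>{1..m}. continuous_on nonneg_orthant (f l) \<and> (\<exists>D<d. orthant_growth (f l) D)"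
  obtains w x where "feasible_config K N k q m f p M d w x"
    "\<And>w' x'. feasible_config K N k q m f p M d w' x' \<Longrightarrow> (\<Sum>j<K. w' j * \<psi> (x' j)) \<le> (\<Sum>j<K. w j * \<psi> (x j))"
proof -
  define \<Phi> where "\<Phi> w x = (\<Sum>j<K. w j * \<psi> (x j))" for w :: "nat \<Rightarrow> real" and x :: "nat \<Rightarrow> real ^ 'n"
  define S where "S = {\<Phi> w x | w x. feasible_config K N k q m f p M d w x}"
  have "D \<le> d" using \<psi>(3) by simp
  from feasible_config_objective_bounded[OF \<psi>(2) this]
  obtain B where "\<forall>w x. feasible_config K N k q m f p M d w x \<longrightarrow> (\<Sum>j<K. w j * \<psi> (x j)) \<le> B" ..
  then have "bdd_above S" unfolding S_def \<Phi>_def bdd_above_def by auto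
  define V where "V = Sup S"
  have upper: "\<Phi> w x \<le> V" if "feasible_config K N k q m f p M d w x" for w x
    unfolding V_def using that \<open>bdd_above S\<close> by (intro cSup_upper) (auto simp: S_def)
  have "S \<noteq> {}" using ex by (auto simp: S_def)
  have "\<forall>s. \<exists>wx. feasible_config K N k q m f p M d (fst wx) (snd wx) \<and> V - inverse (real (Suc s)) < \<Phi> (fst wx) (snd wx)"
  proof
    fix s
    obtain v where "v \<in> S" "V - inverse (real (Suc s)) < v"
      using less_cSupD[OF \<open>S \<noteq> {}\<close>, of "V - inverse (real (Suc s))"] by (auto simp: V_def)
    then show "\<exists>wx. feasible_config K N k q m f p M d (fst wx) (snd wx) \<and> V - inverse (real (Suc s)) < \<Phi> (fst wx) (snd wx)"
      unfolding S_def by auto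
  qed
  from choice[OF this] obtain F where
    "\<forall>s. feasible_config K N k q m f p M d (fst (F s)) (snd (F s)) \<and> V - inverse (real (Suc s)) < \<Phi> (fst (F s)) (snd (F s))" ..
  then have F: "\<And>s. feasible_config K N k q m f p M d (fst (F s)) (snd (F s))"
    "\<And>s. V - inverse (real (Suc s)) < \<Phi> (fst (F s)) (snd (F s))" by simp_all
  obtain r w x where r: "strict_mono r" and wx: "feasible_config K N k q m f p M d w x"
    and lims: "\<And>h D. continuous_on nonneg_orthant h \<Longrightarrow> orthant_growth h D \<Longrightarrow> D < d \<Longrightarrow>
       (\<lambda>s. \<Sum>j<K. fst (F (r s)) j * h (snd (F (r s)) j)) \<longlonglongrightarrow> (\<Sum>j<K. w j * h (x j))"
    using feasible_config_limit[where W = "\<lambda>s. fst (F s)" and X = "\<lambda>s. snd (F s)", OF F(1) \<open>1 < d\<close> f]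
    by blast
  have lim: "(\<lambda>s. \<Phi> (fst (F (r s))) (snd (F (r s)))) \<longlonglongrightarrow> \<Phi> w x"
    unfolding \<Phi>_def by (rule lims[OF \<psi>])
  have "V \<le> \<Phi> w x"
  proof (rule LIMSEQ_le[OF LIMSEQ_inverse_real_of_nat_add_minus[of V] lim], intro exI allI impI)
    fix s
    have "inverse (real (Suc (r s))) \<le> inverse (real (Suc s))"
      using seq_suble[OF r, of s] by (simp add: le_imp_inverse_le)
    then show "V + - inverse (real (Suc s)) \<le> \<Phi> (fst (F (r s))) (snd (F (r s)))"
      using F(2)[of "r s"] by linarith
  qed
  then have "\<Phi> w' x' \<le> \<Phi> w x" if "feasible_config K N k q m f p M d w' x'" for w' x'
    using upper[OF that] by linarith
  with wx show thesis unfolding \<Phi>_def by (rule that)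
qed

section \<open>From configurations to measures and back\<close>

lemma config_as_finite_weights:
  fixes w :: "nat \<Rightarrow> real" and x :: "nat \<Rightarrow> 'a"
  assumes "\<forall>j<K. 0 \<le> w j"
  obtains \<alpha> where "\<forall>y\<in>x ` {..<K}. 0 \<le> \<alpha> y" "\<And>h. (\<Sum>y\<in>x ` {..<K}. \<alpha> y * h y) = (\<Sum>j<K. w j * h (x j))"
proof
  define \<alpha> where "\<alpha> y = (\<Sum>j\<in>{j\<in>{..<K}. x j = y}. w j)" for y
  show "\<forall>y\<in>x ` {..<K}. 0 \<le> \<alpha> y" using assms by (auto simp: \<alpha>_def intro!: sum_nonneg)
  fix h :: "'a \<Rightarrow> real"
  have "(\<Sum>j<K. w j * h (x j)) = (\<Sum>y\<in>x ` {..<K}. \<Sum>j\<in>{j\<in>{..<K}. x j = y}. w j * h (x j))"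
    by (rule sum.image_gen) simp
  also have "\<dots> = (\<Sum>y\<in>x ` {..<K}. \<alpha> y * h y)"
    by (intro sum.cong) (auto simp: \<alpha>_def sum_distrib_right)
  finally show "(\<Sum>y\<in>x ` {..<K}. \<alpha> y * h y) = (\<Sum>j<K. w j * h (x j))" ..
qed

lemma finite_weights_as_config:
  fixes \<alpha> :: "'a \<Rightarrow> real"
  assumes Y: "finite Y" "card Y \<le> K" "Y \<subseteq> S" "\<forall>y\<in>Y. 0 \<le> \<alpha> y" and "z \<in> S"
  obtains w x where "\<forall>j<K. 0 \<le> w j \<and> x j \<in> S" "\<And>h. (\<Sum>j<K. w j * h (x j)) = (\<Sum>y\<in>Y. \<alpha> y * h y)"
proof -
  obtain e where e: "bij_betw e {..<card Y} Y"
    using ex_bij_betw_nat_finite[OF Y(1)] by (auto simp: atLeast0LessThan)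
  define w where "w j = (if j < card Y then \<alpha> (e j) else 0)" for j
  define x where "x j = (if j < card Y then e j else z)" for j
  have "e j \<in> Y" if "j < card Y" for j using e that by (auto simp: bij_betw_def)
  then have "\<forall>j<K. 0 \<le> w j \<and> x j \<in> S" using Y \<open>z \<in> S\<close> by (auto simp: w_def x_def)
  moreover have "(\<Sum>j<K. w j * h (x j)) = (\<Sum>y\<in>Y. \<alpha> y * h y)" for h
  proof -
    have "(\<Sum>j<K. w j * h (x j)) = (\<Sum>j<card Y. w j * h (x j))"
      using Y(2) by (intro sum.mono_neutral_right) (auto simp: w_def)
    also have "\<dots> = (\<Sum>j<card Y. \<alpha> (e j) * h (e j))" by (intro sum.cong) (auto simp: w_def x_def)
    also have "\<dots> = (\<Sum>y\<in>Y. \<alpha> y * h y)" by (rule sum.reindex_bij_betw[OF e])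
    finally show ?thesis .
  qed
  ultimately show thesis by (rule that)
qed

definition atom_measure :: "'a set \<Rightarrow> ('a \<Rightarrow> real) \<Rightarrow> 'a::topological_space measure" where
  "atom_measure X \<alpha> = distr (point_measure X (\<lambda>y. ennreal (\<alpha> y))) borel (\<lambda>y. y)"

lemma sets_atom_measure [simp]: "sets (atom_measure X \<alpha>) = sets borel"
  and space_atom_measure [simp]: "space (atom_measure X \<alpha>) = UNIV"
  by (simp_all add: atom_measure_def)

context
  fixes X :: "'a::topological_space set" and \<alpha> :: "'a \<Rightarrow> real"
  assumes X: "finite X" and \<alpha>: "\<forall>y\<in>X. 0 \<le> \<alpha> y"
begin

lemma emeasure_atom_measure:
  assumes "A \<in> sets borel"
  shows "emeasure (atom_measure X \<alpha>) A = (\<Sum>y\<in>X \<inter> A. ennreal (\<alpha> y))"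
proof -
  have "emeasure (atom_measure X \<alpha>) A = emeasure (point_measure X (\<lambda>y. ennreal (\<alpha> y))) (A \<inter> X)"
    unfolding atom_measure_def using assms by (subst emeasure_distr) (auto simp: space_point_measure)
  also have "\<dots> = (\<Sum>y\<in>A \<inter> X. ennreal (\<alpha> y))"
    using X by (intro emeasure_point_measure_finite2) auto
  finally show ?thesis by (simp add: Int_commute)
qed

lemma integrable_atom_measure:
  fixes h :: "'a \<Rightarrow> real"
  assumes "h \<in> borel_measurable borel"
  shows "integrable (atom_measure X \<alpha>) h"
proof -
  have "(\<lambda>y. y) \<in> measurable (point_measure X (\<lambda>y. ennreal (\<alpha> y))) borel" by simp
  from integrable_distr_eq[OF this assms] show ?thesis
    unfolding atom_measure_def using X by (simp add: integrable_point_measure_finite)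
qed

lemma integral_atom_measure:
  fixes h :: "'a \<Rightarrow> real"
  shows "h \<in> borel_measurable borel \<Longrightarrow> (\<integral>y. h y \<partial>atom_measure X \<alpha>) = (\<Sum>y\<in>X. \<alpha> y * h y)"
  unfolding atom_measure_def using X \<alpha>
  by (subst integral_distr) (auto simp: lebesgue_integral_point_measure_finite)

lemma nn_integral_atom_measure:
  "g \<in> borel_measurable borel \<Longrightarrow> (\<integral>\<^sup>+y. g y \<partial>atom_measure X \<alpha>) = (\<Sum>y\<in>X. ennreal (\<alpha> y) * g y)"
  unfolding atom_measure_def using X by (subst nn_integral_distr) (auto simp: nn_integral_point_measure_finite)

end

lemma nonneg_orthant_borel: "nonneg_orthant \<in> sets (borel :: (real ^ 'n) measure)"
  using closed_nonneg_orthant by (rule borel_closed)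

lemma atom_measure_feasible:
  fixes X :: "(real ^ 'n) set"
  assumes X: "finite X" "X \<subseteq> nonneg_orthant" and \<alpha>: "\<forall>y\<in>X. 0 \<le> \<alpha> y" "sum \<alpha> X = 1"
    and calls: "\<And>i j. j \<in> {1..N i} \<Longrightarrow> (\<Sum>y\<in>X. \<alpha> y * max 0 (y $ i - k i j)) = q i j"
    and moments: "\<And>l. l \<in> {1..m} \<Longrightarrow> (\<Sum>y\<in>X. \<alpha> y * f l y) = p l"
    and moment_le: "(\<Sum>y\<in>X. \<alpha> y * norm y ^ d) \<le> M"
    and \<phi>: "\<phi> \<in> borel_measurable borel" and f: "\<forall>l\<in>{1..m}. f l \<in> borel_measurable borel"
  shows "atom_measure X \<alpha> \<in> feasible_measures N k q m f p M d \<phi>"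
proof -
  define \<nu> where "\<nu> = atom_measure X \<alpha>"
  note integrable = integrable_atom_measure[OF X(1) \<alpha>(1), folded \<nu>_def]
  note integral = integral_atom_measure[OF X(1) \<alpha>(1), folded \<nu>_def]
  have call: "(\<lambda>y::real ^ 'n. max 0 (y $ i - c)) \<in> borel_measurable borel" for i c
    by (intro borel_measurable_continuous_onI continuous_intros continuous_on_component continuous_on_id)
  have mass: "emeasure \<nu> (space \<nu>) = 1"
    using emeasure_atom_measure[OF X(1) \<alpha>(1), of UNIV] \<alpha> by (simp add: \<nu>_def sum_ennreal)
  have "emeasure \<nu> (UNIV - nonneg_orthant) = (\<Sum>y\<in>X \<inter> (UNIV - nonneg_orthant). ennreal (\<alpha> y))"
    using nonneg_orthant_borel unfolding \<nu>_def by (intro emeasure_atom_measure[OF X(1) \<alpha>(1)]) auto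
  moreover have "X \<inter> (UNIV - nonneg_orthant) = {}" using X(2) by blast
  ultimately have outside: "emeasure \<nu> (UNIV - nonneg_orthant) = 0" by simp
  have "(\<integral>\<^sup>+y. ennreal (norm y ^ d) \<partial>\<nu>) = (\<Sum>y\<in>X. ennreal (\<alpha> y) * ennreal (norm y ^ d))"
    unfolding \<nu>_def by (rule nn_integral_atom_measure[OF X(1) \<alpha>(1)]) simp
  also have "\<dots> = (\<Sum>y\<in>X. ennreal (\<alpha> y * norm y ^ d))"
    using \<alpha> by (intro sum.cong) (auto simp: ennreal_mult)
  also have "\<dots> = ennreal (\<Sum>y\<in>X. \<alpha> y * norm y ^ d)"
    using \<alpha> by (intro sum_ennreal) auto
  also have "\<dots> \<le> ennreal M" using moment_le by (simp add: ennreal_leI)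
  finally have moment: "(\<integral>\<^sup>+y. ennreal (norm y ^ d) \<partial>\<nu>) \<le> ennreal M" .
  have "\<nu> \<in> feasible_measures N k q m f p M d \<phi>"
    unfolding feasible_measures_def
  proof (intro CollectI conjI ballI allI)
    show "sets \<nu> = sets borel" by (simp add: \<nu>_def)
    show "finite_measure \<nu>" using mass by (intro finite_measureI) simp
    show "integrable \<nu> \<phi>" by (rule integrable[OF \<phi>])
    show "integrable \<nu> (\<lambda>y. max 0 (y $ i - k i j))" "(\<integral>y. max 0 (y $ i - k i j) \<partial>\<nu>) = q i j"
      if "j \<in> {1..N i}" for i j
      using integrable[OF call] integral[OF call] calls[OF that] by simp_all
    show "integrable \<nu> (f l)" "(\<integral>y. f l y \<partial>\<nu>) = p l" if "l \<in> {1..m}" for l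
      using integrable[OF f[rule_format, OF that]] integral[OF f[rule_format, OF that]] moments[OF that]
      by simp_all
  qed (use mass outside moment in simp_all)
  then show ?thesis by (simp add: \<nu>_def)
qed

lemma feasible_config_atomic_measure:
  fixes x :: "nat \<Rightarrow> real ^ 'n"
  assumes feasible: "feasible_config K N k q m f p M d w x"
    and \<phi>: "\<phi> \<in> borel_measurable borel" and f: "\<forall>l\<in>{1..m}. f l \<in> borel_measurable borel"
  obtains \<nu> where "\<nu> \<in> feasible_measures N k q m f p M d \<phi>" "atomic_measure_le K \<nu>"
    "\<And>h. h \<in> borel_measurable borel \<Longrightarrow> (\<integral>y. h y \<partial>\<nu>) = (\<Sum>j<K. w j * h (x j))"
proof -
  have wx: "\<forall>j<K. 0 \<le> w j \<and> x j \<in> nonneg_orthant" and mass: "(\<Sum>j<K. w j) = 1"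
    and calls: "\<And>i jj. jj \<in> {1..N i} \<Longrightarrow> (\<Sum>j<K. w j * max 0 (x j $ i - k i jj)) = q i jj"
    and moments: "\<And>l. l \<in> {1..m} \<Longrightarrow> (\<Sum>j<K. w j * f l (x j)) = p l"
    and moment_le: "(\<Sum>j<K. w j * norm (x j) ^ d) \<le> M"
    using feasible unfolding feasible_config_def by blast+
  define X where "X = x ` {..<K}"
  have "\<forall>j<K. 0 \<le> w j" using wx by blast
  then obtain \<alpha> where \<alpha>: "\<forall>y\<in>X. 0 \<le> \<alpha> y" and sums: "\<And>h. (\<Sum>y\<in>X. \<alpha> y * h y) = (\<Sum>j<K. w j * h (x j))"
    unfolding X_def using config_as_finite_weights[where x = x] by blast
  have X: "finite X" "card X \<le> K" "X \<subseteq> nonneg_orthant"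
    using card_image_le[of "{..<K}" x] wx by (auto simp: X_def)
  have "sum \<alpha> X = 1" using sums[of "\<lambda>_. 1"] mass by simp
  then have "atom_measure X \<alpha> \<in> feasible_measures N k q m f p M d \<phi>"
    using X \<alpha> calls moments moment_le \<phi> f by (intro atom_measure_feasible) (simp_all add: sums)
  moreover have "atomic_measure_le K (atom_measure X \<alpha>)"
    unfolding atomic_measure_le_def
    by (intro exI[of _ X] exI[of _ \<alpha>] conjI ballI) (use X \<alpha> emeasure_atom_measure[OF X(1) \<alpha>] in auto)
  moreover have "(\<integral>y. h y \<partial>atom_measure X \<alpha>) = (\<Sum>j<K. w j * h (x j))" if "h \<in> borel_measurable borel" for h
    using integral_atom_measure[OF X(1) \<alpha> that] sums by simp
  ultimately show thesis by (rule that)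
qed

text \<open>The test functions of the moment problem, indexed by the call options (i, j), the moment
  functions l, the objective (True) and the d-th moment (False).\<close>

definition constraint_index :: "('n \<Rightarrow> nat) \<Rightarrow> nat \<Rightarrow> (('n \<times> nat) + (nat + bool)) set" where
  "constraint_index N m =
     Inl ` (SIGMA i:UNIV. {1..N i}) \<union> Inr ` Inl ` {1..m} \<union> {Inr (Inr True), Inr (Inr False)}"

definition constraint_fun ::
  "('n \<Rightarrow> nat \<Rightarrow> real) \<Rightarrow> (nat \<Rightarrow> real ^ 'n \<Rightarrow> real) \<Rightarrow> nat \<Rightarrow> (real ^ 'n \<Rightarrow> real) \<Rightarrow>
   ('n \<times> nat) + (nat + bool) \<Rightarrow> real ^ 'n \<Rightarrow> real" where
  "constraint_fun k f d \<psi> c = (case c of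
       Inl (i, j) \<Rightarrow> (\<lambda>y. max 0 (y $ i - k i j))
     | Inr (Inl l) \<Rightarrow> f l
     | Inr (Inr True) \<Rightarrow> \<psi>
     | Inr (Inr False) \<Rightarrow> (\<lambda>y. norm y ^ d))"

lemma card_constraint_index:
  fixes N :: "'n::finite \<Rightarrow> nat"
  shows "card (constraint_index N m) \<le> (\<Sum>i\<in>UNIV. N i) + m + 2"
proof -
  define A :: "(('n \<times> nat) + (nat + bool)) set" where "A = Inl ` (SIGMA i:UNIV. {1..N i})"
  define B :: "(('n \<times> nat) + (nat + bool)) set" where "B = Inr ` Inl ` {1..m}"
  define C :: "(('n \<times> nat) + (nat + bool)) set" where "C = {Inr (Inr True), Inr (Inr False)}"
  have "card A \<le> (\<Sum>i\<in>UNIV. N i)"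
    using card_image_le[of "SIGMA i:UNIV. {1..N i}" Inl] by (simp add: A_def)
  moreover have "card B \<le> m"
    unfolding B_def by (simp add: card_image inj_on_def)
  moreover have "card C \<le> 2" by (simp add: C_def card_insert_if)
  moreover have "card (A \<union> B \<union> C) \<le> card A + card B + card C"
    using card_Un_le[of "A \<union> B" C] card_Un_le[of A B] by linarith
  ultimately show ?thesis unfolding constraint_index_def A_def B_def C_def by linarith
qed

lemma feasible_measure_props:
  assumes "\<mu> \<in> feasible_measures N k q m f p M d \<phi>" and "0 \<le> M"
  shows "prob_space \<mu>" "AE y in \<mu>. y \<in> nonneg_orthant"
    "integrable \<mu> (\<lambda>y. norm y ^ d)" "(\<integral>y. norm y ^ d \<partial>\<mu>) \<le> M"
proof -
  have sets: "sets \<mu> = sets borel" and outside: "emeasure \<mu> (UNIV - nonneg_orthant) = 0"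
    and mass: "emeasure \<mu> (space \<mu>) = 1" and moment: "(\<integral>\<^sup>+y. ennreal (norm y ^ d) \<partial>\<mu>) \<le> ennreal M"
    using assms(1) unfolding feasible_measures_def by blast+
  show "prob_space \<mu>" using mass by (rule prob_spaceI)
  have space: "space \<mu> = UNIV" using sets_eq_imp_space_eq[OF sets] by simp
  have "- nonneg_orthant \<in> sets (borel :: (real ^ 'n) measure)"
    using closed_nonneg_orthant by (intro borel_open open_Compl)
  then have "UNIV - nonneg_orthant \<in> sets \<mu>" using sets by (simp add: Compl_eq_Diff_UNIV)
  then show "AE y in \<mu>. y \<in> nonneg_orthant"
    by (subst AE_iff_measurable) (use outside space in auto)
  have "(\<lambda>y::real ^ 'n. norm y ^ d) \<in> borel_measurable borel"
    by (intro borel_measurable_continuous_onI continuous_intros)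
  then have meas: "(\<lambda>y. norm y ^ d) \<in> borel_measurable \<mu>"
    by (simp add: measurable_cong_sets[OF sets refl])
  moreover have "(\<integral>\<^sup>+y. ennreal (norm y ^ d) \<partial>\<mu>) < \<infinity>"
    using le_less_trans[OF moment ennreal_less_top] by simp
  ultimately show int: "integrable \<mu> (\<lambda>y. norm y ^ d)" by (intro integrableI_nonneg) auto
  have "ennreal (\<integral>y. norm y ^ d \<partial>\<mu>) = (\<integral>\<^sup>+y. ennreal (norm y ^ d) \<partial>\<mu>)"
    by (rule nn_integral_eq_integral[OF int, symmetric]) simp
  with moment have "ennreal (\<integral>y. norm y ^ d \<partial>\<mu>) \<le> ennreal M" by simp
  with assms(2) show "(\<integral>y. norm y ^ d \<partial>\<mu>) \<le> M" by simp
qed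

lemma feasible_measure_config:
  fixes \<mu> :: "(real ^ 'n::finite) measure" and N :: "'n \<Rightarrow> nat"
  assumes \<mu>: "\<mu> \<in> feasible_measures N k q m f p M d \<phi>" and \<psi>: "integrable \<mu> \<psi>"
    and K: "(\<Sum>i\<in>UNIV. N i) + m + 3 \<le> K" and "0 \<le> M"
  obtains w x where "feasible_config K N k q m f p M d w x" "(\<Sum>j<K. w j * \<psi> (x j)) = (\<integral>y. \<psi> y \<partial>\<mu>)"
proof -
  have calls: "\<And>i j. j \<in> {1..N i} \<Longrightarrow> integrable \<mu> (\<lambda>y. max 0 (y $ i - k i j)) \<and> (\<integral>y. max 0 (y $ i - k i j) \<partial>\<mu>) = q i j"
    and moments: "\<And>l. l \<in> {1..m} \<Longrightarrow> integrable \<mu> (f l) \<and> (\<integral>y. f l y \<partial>\<mu>) = p l"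
    using \<mu> unfolding feasible_measures_def by blast+
  note props = feasible_measure_props[OF \<mu> \<open>0 \<le> M\<close>]
  let ?I = "constraint_index N m" and ?G = "constraint_fun k f d \<psi>"
  have "finite ?I" by (simp add: constraint_index_def)
  moreover have "\<forall>c\<in>?I. integrable \<mu> (?G c)"
    using calls moments \<psi> props(3) by (auto simp: constraint_index_def constraint_fun_def)
  ultimately obtain Y \<alpha> where Y: "finite Y" "Y \<subseteq> nonneg_orthant" "card Y \<le> card ?I + 1" "\<forall>y\<in>Y. 0 \<le> \<alpha> y"
    "sum \<alpha> Y = 1" "\<forall>c\<in>?I. (\<Sum>y\<in>Y. \<alpha> y * ?G c y) = (\<integral>y. ?G c y \<partial>\<mu>)"
    using finite_moment_representation[OF props(1) _ _ props(2)] by blast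
  have "card Y \<le> K" using Y(3) card_constraint_index[of N m] K by linarith
  then obtain w x where wx: "\<forall>j<K. 0 \<le> w j \<and> x j \<in> nonneg_orthant"
    and sums: "\<And>h. (\<Sum>j<K. w j * h (x j)) = (\<Sum>y\<in>Y. \<alpha> y * h y)"
    using finite_weights_as_config[OF Y(1) _ Y(2,4) zero_in_nonneg_orthant] by blast
  have matched: "(\<Sum>j<K. w j * ?G c (x j)) = (\<integral>y. ?G c y \<partial>\<mu>)" if "c \<in> ?I" for c
    using sums Y(6) that by simp
  have "feasible_config K N k q m f p M d w x"
    unfolding feasible_config_def
  proof (intro conjI allI ballI impI)
    show "0 \<le> w j" "x j \<in> nonneg_orthant" if "j < K" for j using wx that by blast+
    show "(\<Sum>j<K. w j) = 1" using sums[of "\<lambda>_. 1"] Y(5) by simp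
    show "(\<Sum>j<K. w j * max 0 (x j $ i - k i jj)) = q i jj" if "jj \<in> {1..N i}" for i jj
      using matched[of "Inl (i, jj)"] calls[OF that] that by (simp add: constraint_index_def constraint_fun_def)
    show "(\<Sum>j<K. w j * f l (x j)) = p l" if "l \<in> {1..m}" for l
      using matched[of "Inr (Inl l)"] moments[OF that] that by (simp add: constraint_index_def constraint_fun_def)
    show "(\<Sum>j<K. w j * norm (x j) ^ d) \<le> M"
      using matched[of "Inr (Inr False)"] props(4) by (simp add: constraint_index_def constraint_fun_def)
  qed
  moreover have "(\<Sum>j<K. w j * \<psi> (x j)) = (\<integral>y. \<psi> y \<partial>\<mu>)"
    using matched[of "Inr (Inr True)"] by (simp add: constraint_index_def constraint_fun_def)
  ultimately show thesis by (rule that)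
qed

section \<open>Optimal atomic measures\<close>

theorem feasible_measures_max_atomic:
  fixes N :: "'n::finite \<Rightarrow> nat" and \<psi> :: "real ^ 'n \<Rightarrow> real"
  assumes nonempty: "feasible_measures N k q m f p M d \<phi> \<noteq> {}"
    and "0 \<le> M" and "1 < d" and K: "(\<Sum>i\<in>UNIV. N i) + m + 3 \<le> K"
    and \<psi>: "continuous_on nonneg_orthant \<psi>" "orthant_growth \<psi> D" "D < d" "\<psi> \<in> borel_measurable borel"
    and \<psi>_int: "\<forall>\<nu>\<in>feasible_measures N k q m f p M d \<phi>. integrable \<nu> \<psi>"
    and \<phi>: "\<phi> \<in> borel_measurable borel"
    and f: "\<forall>l\<in>{1..m}. continuous_on UNIV (f l) \<and> (\<exists>D<d. orthant_growth (f l) D)"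
  shows "\<exists>\<mu>\<in>feasible_measures N k q m f p M d \<phi>. atomic_measure_le K \<mu> \<and>
    (\<forall>\<nu>\<in>feasible_measures N k q m f p M d \<phi>. (\<integral>x. \<psi> x \<partial>\<nu>) \<le> (\<integral>x. \<psi> x \<partial>\<mu>))"
proof -
  have config: "\<exists>w x. feasible_config K N k q m f p M d w x \<and> (\<Sum>j<K. w j * \<psi> (x j)) = (\<integral>y. \<psi> y \<partial>\<nu>)"
    if "\<nu> \<in> feasible_measures N k q m f p M d \<phi>" for \<nu>
    using feasible_measure_config[OF that \<psi>_int[rule_format, OF that] K \<open>0 \<le> M\<close>] by blast
  then have "\<exists>w x. feasible_config K N k q m f p M d w x" using nonempty by blast
  moreover have "\<forall>l\<in>{1..m}. continuous_on nonneg_orthant (f l) \<and> (\<exists>D<d. orthant_growth (f l) D)"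
    using f continuous_on_subset[of UNIV] by blast
  ultimately obtain w x where wx: "feasible_config K N k q m f p M d w x"
    and max: "\<And>w' x'. feasible_config K N k q m f p M d w' x' \<Longrightarrow> (\<Sum>j<K. w' j * \<psi> (x' j)) \<le> (\<Sum>j<K. w j * \<psi> (x j))"
    using feasible_config_max_exists[OF _ \<psi>(1-3) \<open>1 < d\<close>] by blast
  have "\<forall>l\<in>{1..m}. f l \<in> borel_measurable borel" using f borel_measurable_continuous_onI by blast
  then obtain \<mu> where \<mu>: "\<mu> \<in> feasible_measures N k q m f p M d \<phi>" "atomic_measure_le K \<mu>"
    "(\<integral>y. \<psi> y \<partial>\<mu>) = (\<Sum>j<K. w j * \<psi> (x j))"
    using feasible_config_atomic_measure[OF wx \<phi>] \<psi>(4) by blast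
  show ?thesis
  proof (intro bexI conjI ballI)
    fix \<nu> assume "\<nu> \<in> feasible_measures N k q m f p M d \<phi>"
    then show "(\<integral>x. \<psi> x \<partial>\<nu>) \<le> (\<integral>x. \<psi> x \<partial>\<mu>)" using config max \<mu>(3) by metis
  qed (use \<mu> in auto)
qed

lemma least_even_above:
  fixes d B :: nat
  assumes "d = (LEAST e. even e \<and> e \<ge> B + 1)"
  shows "1 < d" "B < d"
proof -
  have "even d \<and> B + 1 \<le> d" unfolding assms by (rule LeastI[of _ "2 * (B + 1)"]) simp
  moreover from this have "d \<noteq> 1" by auto
  ultimately show "1 < d" "B < d" by auto
qed

lemma is_poly_deg_poly_deg: "is_poly f \<Longrightarrow> is_poly_deg (poly_deg f) f"
  unfolding is_poly_def poly_deg_def by (rule LeastI_ex)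

lemma is_pw_poly_deg_pw_poly_deg: "is_pw_poly S \<phi> \<Longrightarrow> is_pw_poly_deg S (pw_poly_deg S \<phi>) \<phi>"
  unfolding is_pw_poly_def pw_poly_deg_def by (rule LeastI_ex)

lemma degree_exponent_bounds:
  fixes \<phi> :: "real ^ 'n \<Rightarrow> real" and N :: "'n::finite \<Rightarrow> nat" and k :: "'n \<Rightarrow> nat \<Rightarrow> real"
    and f :: "nat \<Rightarrow> real ^ 'n \<Rightarrow> real" and m :: nat
  assumes f_poly: "\<forall>l\<in>{1..m}. is_poly (f l)" and \<phi>_pw: "is_pw_poly nonneg_orthant \<phi>"
    and d_def: "d = (LEAST e. even e \<and>
                  e \<ge> Max ({pw_poly_deg nonneg_orthant \<phi>} \<union>
                        {pw_poly_deg nonneg_orthant (\<lambda>x. max 0 (x $ i - k i j)) | i j. j \<in> {1..N i}} \<union>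
                        {poly_deg (f l) | l. l \<in> {1..m}}) + 1)"
  shows "1 < d" "orthant_growth \<phi> (pw_poly_deg nonneg_orthant \<phi>)" "pw_poly_deg nonneg_orthant \<phi> < d"
    "\<forall>l\<in>{1..m}. continuous_on UNIV (f l) \<and> (\<exists>D<d. orthant_growth (f l) D)"
proof -
  define degrees where "degrees = {pw_poly_deg nonneg_orthant \<phi>} \<union>
    {pw_poly_deg nonneg_orthant (\<lambda>x. max 0 (x $ i - k i j)) | i j. j \<in> {1..N i}} \<union>
    {poly_deg (f l) | l. l \<in> {1..m}}"
  have "{pw_poly_deg nonneg_orthant (\<lambda>x. max 0 (x $ i - k i j)) | i j. j \<in> {1..N i}} =
      (\<lambda>(i, j). pw_poly_deg nonneg_orthant (\<lambda>x::real ^ 'n. max 0 (x $ i - k i j))) ` (SIGMA i:UNIV. {1..N i})"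
    by (auto simp del: atLeastAtMost_iff)
  moreover have "{poly_deg (f l) | l. l \<in> {1..m}} = (\<lambda>l. poly_deg (f l)) ` {1..m}" by auto
  ultimately have "finite degrees" unfolding degrees_def by simp
  have "1 < d" "Max degrees < d" using least_even_above[OF d_def[folded degrees_def]] by simp_all
  then show "1 < d" by simp
  have deg_lt: "a < d" if "a \<in> degrees" for a
    using Max_ge[OF \<open>finite degrees\<close> that] \<open>Max degrees < d\<close> by linarith
  show "orthant_growth \<phi> (pw_poly_deg nonneg_orthant \<phi>)"
    by (rule orthant_growth_is_pw_poly_deg[OF is_pw_poly_deg_pw_poly_deg[OF \<phi>_pw]])
  show "pw_poly_deg nonneg_orthant \<phi> < d" by (rule deg_lt) (simp add: degrees_def)
  show "\<forall>l\<in>{1..m}. continuous_on UNIV (f l) \<and> (\<exists>D<d. orthant_growth (f l) D)"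
  proof
    fix l assume "l \<in> {1..m}"
    moreover have "poly_deg (f l) \<in> degrees" using \<open>l \<in> {1..m}\<close> by (auto simp: degrees_def)
    ultimately have "is_poly_deg (poly_deg (f l)) (f l)" "poly_deg (f l) < d"
      using f_poly is_poly_deg_poly_deg deg_lt by blast+
    then show "continuous_on UNIV (f l) \<and> (\<exists>D<d. orthant_growth (f l) D)"
      using continuous_on_is_poly_deg orthant_growth_is_poly_deg by blast
  qed
qed

lemma feasible_measures_objective_measurable:
  "feasible_measures N k q m f p M d \<phi> \<noteq> {} \<Longrightarrow> \<phi> \<in> borel_measurable borel"
  unfolding feasible_measures_def using borel_measurable_integrable measurable_cong_sets by blast

theorem corollary1:
  fixes N :: "'n::finite \<Rightarrow> nat"
    and k q :: "'n \<Rightarrow> nat \<Rightarrow> real"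
    and m :: nat
    and f :: "nat \<Rightarrow> real ^ 'n \<Rightarrow> real"
    and p :: "nat \<Rightarrow> real"
    and M :: real
    and \<phi> :: "real ^ 'n \<Rightarrow> real"
    and d :: nat
  assumes f_poly: "\<forall>l\<in>{1..m}. is_poly (f l)"
    and M_nonneg: "0 \<le> M"
    and \<phi>_cont: "continuous_on nonneg_orthant \<phi>"
    and \<phi>_nonneg: "\<forall>x\<in>nonneg_orthant. 0 \<le> \<phi> x"
    and \<phi>_pw: "is_pw_poly nonneg_orthant \<phi>"
    and d_def: "d = (LEAST e. even e \<and>
                  e \<ge> Max ({pw_poly_deg nonneg_orthant \<phi>} \<union>
                        {pw_poly_deg nonneg_orthant (\<lambda>x. max 0 (x $ i - k i j)) | i j. j \<in> {1..N i}} \<union>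
                        {poly_deg (f l) | l. l \<in> {1..m}}) + 1)"
    and feasible: "feasible_measures N k q m f p M d \<phi> \<noteq> {}"
  shows "(\<exists>\<mu>\<in>feasible_measures N k q m f p M d \<phi>.
            atomic_measure_le (CARD('n) * (\<Sum>i\<in>UNIV. N i) + m + 3) \<mu> \<and>
            (\<forall>\<nu>\<in>feasible_measures N k q m f p M d \<phi>. (\<integral>x. \<phi> x \<partial>\<nu>) \<le> (\<integral>x. \<phi> x \<partial>\<mu>)))
       \<and> (\<exists>\<mu>\<in>feasible_measures N k q m f p M d \<phi>.
            atomic_measure_le (CARD('n) * (\<Sum>i\<in>UNIV. N i) + m + 3) \<mu> \<and>
            (\<forall>\<nu>\<in>feasible_measures N k q m f p M d \<phi>. (\<integral>x. \<phi> x \<partial>\<mu>) \<le> (\<integral>x. \<phi> x \<partial>\<nu>)))"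
proof -
  note d = degree_exponent_bounds[OF f_poly \<phi>_pw d_def]
  have \<phi>_meas: "\<phi> \<in> borel_measurable borel" by (rule feasible_measures_objective_measurable[OF feasible])
  have \<phi>_int: "\<forall>\<nu>\<in>feasible_measures N k q m f p M d \<phi>. integrable \<nu> \<phi>"
    by (simp add: feasible_measures_def)
  have K: "(\<Sum>i\<in>UNIV. N i) + m + 3 \<le> CARD('n) * (\<Sum>i\<in>UNIV. N i) + m + 3" by simp
  note max_atomic = feasible_measures_max_atomic[OF feasible M_nonneg d(1) K _ _ _ _ _ \<phi>_meas d(4)]
  have "\<exists>\<mu>\<in>feasible_measures N k q m f p M d \<phi>. atomic_measure_le (CARD('n) * (\<Sum>i\<in>UNIV. N i) + m + 3) \<mu> \<and>
      (\<forall>\<nu>\<in>feasible_measures N k q m f p M d \<phi>. (\<integral>x. - \<phi> x \<partial>\<nu>) \<le> (\<integral>x. - \<phi> x \<partial>\<mu>))"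
    using \<phi>_cont \<phi>_meas \<phi>_int
    by (intro max_atomic[OF _ orthant_growth_uminus[OF d(2)] d(3)]) (auto intro: continuous_intros)
  then show ?thesis
    using max_atomic[OF \<phi>_cont d(2,3) \<phi>_meas \<phi>_int] by simp
qed

end
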